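(* Let $K$ be a commutative integral domain, $n,r\ge1$, $V$ a free $K$-module of rank $n$, and $\Phi:K\mathfrak{S}_r\to\operatorname{End}_K(V^{\otimes r})$ the representation given by right place permutations $(u_1\otimes\cdots\otimes u_r)\sigma=u_{1\sigma^{-1}}\otimes\cdots\otimes u_{r\sigma^{-1}}$. Then $\Phi(K\mathfrak{S}_r)$ is a free $K$-module of rank $$r!-\sum_{\lambda\in P}N(\lambda)^2,$$ where $P$ is the set of partitions $\lambda$ of $r$ with $\lambda_1>n$ and $N(\lambda)$ is the number of standard tableaux of shape $\lambda$. In particular this rank is independent of $K$.
   Context: A standard tableau of shape $\lambda$ (a partition of $r$) is a filling of the Young diagram of $\lambda$ with $1,\dots,r$, each used once, increasing along rows and down columns. *)

theory Defs
  imports Main "HOL.Modules" "HOL-Library.Function_Algebras" "HOL-Combinatorics.Permutations"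
begin

text \<open>Basis of V^{\<otimes> r} for V = K^n: words of length r over {0..<n}
  (the tensor e_{w_1} \<otimes> ... \<otimes> e_{w_r}).\<close>
definition words :: "nat \<Rightarrow> nat \<Rightarrow> nat list set" where
  "words n r = {w. length w = r \<and> set w \<subseteq> {..<n}}"

definition place_perm :: "(nat \<Rightarrow> nat) \<Rightarrow> nat list \<Rightarrow> nat list" where
  "place_perm \<sigma> w = map (\<lambda>i. w ! (inv \<sigma> i)) [0..<length w]"

text \<open>Endomorphisms of V^{\<otimes> r} as matrices indexed by words (entry (v,w) is the
  v-coordinate of the image of basis vector w); Phi sigma is the matrix of the action.\<close>
definition Phi :: "nat \<Rightarrow> nat \<Rightarrow> (nat \<Rightarrow> nat) \<Rightarrow> nat list \<Rightarrow> nat list \<Rightarrow> 'a::comm_ring_1" where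
  "Phi n r \<sigma> = (\<lambda>v w. if v \<in> words n r \<and> w \<in> words n r \<and> v = place_perm \<sigma> w then 1 else 0)"

definition mscale :: "'a::comm_ring_1 \<Rightarrow> (nat list \<Rightarrow> nat list \<Rightarrow> 'a) \<Rightarrow> (nat list \<Rightarrow> nat list \<Rightarrow> 'a)" where
  "mscale c M = (\<lambda>v w. c * M v w)"

definition free_of_rank :: "(nat list \<Rightarrow> nat list \<Rightarrow> 'a::comm_ring_1) set \<Rightarrow> nat \<Rightarrow> bool" where
  "free_of_rank S m \<longleftrightarrow> (\<exists>B. finite B \<and> card B = m \<and> B \<subseteq> S \<and>
      \<not> module.dependent mscale B \<and> module.span mscale B = S)"

definition partitions :: "nat \<Rightarrow> nat list set" where
  "partitions r = {lam. sum_list lam = r \<and> sorted_wrt (\<ge>) lam \<and> 0 \<notin> set lam}"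

definition young_cells :: "nat list \<Rightarrow> (nat \<times> nat) set" where
  "young_cells lam = {(i, j). i < length lam \<and> j < lam ! i}"

definition standard_tableaux :: "nat list \<Rightarrow> ((nat \<times> nat) \<Rightarrow> nat) set" where
  "standard_tableaux lam = {T.
     bij_betw T (young_cells lam) {1..sum_list lam} \<and>
     (\<forall>c. c \<notin> young_cells lam \<longrightarrow> T c = 0) \<and>
     (\<forall>i j. (i, j) \<in> young_cells lam \<and> (i, Suc j) \<in> young_cells lam \<longrightarrow> T (i, j) < T (i, Suc j)) \<and>
     (\<forall>i j. (i, j) \<in> young_cells lam \<and> (Suc i, j) \<in> young_cells lam \<longrightarrow> T (i, j) < T (Suc i, j))}"

definition num_std_tableaux :: "nat list \<Rightarrow> nat" where
  "num_std_tableaux lam = card (standard_tableaux lam)"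

end

theory Submission
  imports Defs
begin

text \<open>
  The matrices of the permutations without increasing
  subsequence of length \<open>> n\<close> form a basis of the span.  They span: if \<open>\<sigma>\<close> is increasing on a
  set \<open>S\<close> of more than \<open>n\<close> positions, every basis word repeats a letter on \<open>S\<close>, so the
  alternating sum of \<open>\<Phi> (\<sigma> \<circ> \<pi>)\<close> over the permutations \<open>\<pi>\<close> of \<open>S\<close> vanishes, which expresses
  \<open>\<Phi> \<sigma>\<close> through lexicographically larger permutations.  They are independent: evaluated at
  the word whose \<open>i\<close>-th letter is the length of the longest increasing subsequence of \<open>\<sigma>\<close>
  ending at \<open>i\<close>, they are unitriangular with respect to the lexicographic order.

  The other permutations are counted with Fomin's growth diagrams.  The local rules fill the
  \<open>r \<times> r\<close> grid with Young diagrams whose first row at \<open>(i, j)\<close> is the longest increasing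
  subsequence inside the rectangle (the first-row case of Greene's theorem).  The rules can be
  inverted, so a permutation corresponds to the pair of saturated chains of diagrams on the
  outer boundary, i.e. to a pair of standard tableaux of a common shape, and every such pair
  arises.  The permutations with a long increasing subsequence are those whose shape has first
  row longer than \<open>n\<close>.
\<close>

section \<open>A basis of the span of the place permutations\<close>

definition perms :: "nat \<Rightarrow> (nat \<Rightarrow> nat) set" where
  "perms r = {\<sigma>. \<sigma> permutes {..<r}}"

definition lis_le :: "nat \<Rightarrow> nat \<Rightarrow> (nat \<Rightarrow> nat) \<Rightarrow> bool" where
  "lis_le n r \<sigma> \<longleftrightarrow> (\<forall>S. S \<subseteq> {..<r} \<longrightarrow> strict_mono_on S \<sigma> \<longrightarrow> card S \<le> n)"

definition lex_less :: "(nat \<Rightarrow> nat) \<Rightarrow> (nat \<Rightarrow> nat) \<Rightarrow> bool" where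
  "lex_less \<tau> \<sigma> \<longleftrightarrow> (\<exists>p. (\<forall>i<p. \<tau> i = \<sigma> i) \<and> \<tau> p < \<sigma> p)"

lemma lex_less_irrefl: "\<not> lex_less \<sigma> \<sigma>"
  by (auto simp: lex_less_def)

lemma lex_less_trans:
  assumes "lex_less \<rho> \<sigma>" "lex_less \<sigma> \<tau>"
  shows "lex_less \<rho> \<tau>"
proof -
  obtain p where p: "\<forall>i<p. \<rho> i = \<sigma> i" "\<rho> p < \<sigma> p"
    using assms(1) unfolding lex_less_def by blast
  obtain q where q: "\<forall>i<q. \<sigma> i = \<tau> i" "\<sigma> q < \<tau> q"
    using assms(2) unfolding lex_less_def by blast
  show ?thesis
    unfolding lex_less_def using p q
    by (intro exI[of _ "min p q"]) (cases p q rule: linorder_cases; simp add: min_def)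
qed

lemma finite_perms: "finite (perms r)"
  unfolding perms_def by (simp add: finite_permutations)

lemma card_perms: "card (perms r) = fact r"
  unfolding perms_def using card_permutations[of "{..<r}"] by simp

lemma perms_inj: "\<sigma> \<in> perms r \<Longrightarrow> inj \<sigma>"
  unfolding perms_def using permutes_inj by blast

lemma perms_less: "\<sigma> \<in> perms r \<Longrightarrow> i < r \<Longrightarrow> \<sigma> i < r"
  unfolding perms_def using permutes_in_image[of \<sigma> "{..<r}" i] by simp

lemma perms_inv_less: "\<sigma> \<in> perms r \<Longrightarrow> i < r \<Longrightarrow> inv \<sigma> i < r"
  unfolding perms_def using permutes_in_image[OF permutes_inv, of \<sigma> "{..<r}" i] by simp

lemma perms_comp_permutes:
  assumes "\<sigma> \<in> perms r" "\<pi> permutes P" "P \<subseteq> {..<r}"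
  shows "\<sigma> \<circ> \<pi> \<in> perms r"
  using assms permutes_subset[OF assms(2,3)] unfolding perms_def
  by (simp add: permutes_compose)

lemma least_moved_point:
  fixes \<pi> :: "nat \<Rightarrow> nat"
  assumes "\<pi> permutes P" "\<pi> \<noteq> id"
  obtains p where "p \<in> P" "\<pi> p \<in> P" "p < \<pi> p" "\<forall>i<p. \<pi> i = i"
proof -
  have ex: "\<exists>p. \<pi> p \<noteq> p" using assms(2) by auto
  define p where "p = (LEAST p. \<pi> p \<noteq> p)"
  have moved: "\<pi> p \<noteq> p" unfolding p_def using LeastI_ex[OF ex] .
  have fixed: "\<forall>i<p. \<pi> i = i" unfolding p_def using not_less_Least by blast
  have "p \<in> P" using moved assms(1) permutes_not_in by metis
  moreover have "\<pi> p \<in> P" using \<open>p \<in> P\<close> assms(1) permutes_in_image by metis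
  moreover have "p < \<pi> p"
  proof (rule ccontr)
    assume "\<not> p < \<pi> p"
    then have "\<pi> (\<pi> p) = \<pi> p" using moved fixed by auto
    then show False using moved permutes_inj[OF assms(1)] by (meson injD)
  qed
  ultimately show ?thesis using fixed that by blast
qed

lemma lex_less_comp_strict_mono_on:
  assumes "\<pi> permutes P" "\<pi> \<noteq> id" "strict_mono_on P \<sigma>"
  shows "lex_less \<sigma> (\<sigma> \<circ> \<pi>)"
proof -
  obtain p where p: "p \<in> P" "\<pi> p \<in> P" "p < \<pi> p" "\<forall>i<p. \<pi> i = i"
    using least_moved_point[OF assms(1,2)] .
  have "\<sigma> p < \<sigma> (\<pi> p)" using strict_mono_onD[OF assms(3) p(1-3)] .
  then show ?thesis unfolding lex_less_def using p(4) by (intro exI[of _ p]) auto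
qed

lemma bij_betw_comp_swap_evenperm:
  assumes "finite P" "a \<in> P" "b \<in> P" "a \<noteq> b"
  shows "bij_betw (\<lambda>\<pi>. \<pi> \<circ> Transposition.transpose a b)
           {\<pi>. \<pi> permutes P \<and> evenperm \<pi>} {\<pi>. \<pi> permutes P \<and> \<not> evenperm \<pi>}"
proof -
  define t where "t = Transposition.transpose a b"
  have t: "t permutes P" "\<not> evenperm t" "t \<circ> t = id"
    using assms by (auto simp: t_def permutes_swap_id evenperm_swap)
  have "permutation t" using t(1) assms(1) permutation_permutes by blast
  have parity: "\<pi> \<circ> t permutes P \<and> evenperm (\<pi> \<circ> t) = (\<not> evenperm \<pi>)" if "\<pi> permutes P" for \<pi>
  proof -
    have "permutation \<pi>" using that assms(1) permutation_permutes by blast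
    then show ?thesis using that t \<open>permutation t\<close> by (simp add: permutes_compose evenperm_comp)
  qed
  show ?thesis
    unfolding t_def[symmetric]
    by (rule bij_betw_byWitness[where f' = "\<lambda>\<pi>. \<pi> \<circ> t"]) (auto simp: comp_assoc t(3) parity)
qed

type_synonym 'a word_matrix = "nat list \<Rightarrow> nat list \<Rightarrow> 'a"

lemma sum_fun_apply2: "(sum f A) x y = sum (\<lambda>a. f a x y) A"
  by (induction A rule: infinite_finite_induct) auto

interpretation mat: module mscale
proof
  fix a b :: "'a::comm_ring_1" and x y :: "'a word_matrix"
  show "mscale a (x + y) = mscale a x + mscale a y"
    unfolding mscale_def by (intro ext) (simp add: distrib_left)
  show "mscale (a + b) x = mscale a x + mscale b x"
    unfolding mscale_def by (intro ext) (simp add: distrib_right)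
  show "mscale a (mscale b x) = mscale (a * b) x"
    unfolding mscale_def by (intro ext) (simp add: mult.assoc)
  show "mscale 1 x = x"
    unfolding mscale_def by simp
qed

lemma place_perm_comp_transpose:
  assumes "bij \<rho>" "w ! a = w ! b"
  shows "place_perm (\<rho> \<circ> Transposition.transpose a b) w = place_perm \<rho> w"
proof -
  have "inv (\<rho> \<circ> Transposition.transpose a b) = Transposition.transpose a b \<circ> inv \<rho>"
    using o_inv_distrib[OF assms(1), of "Transposition.transpose a b"] by simp
  moreover have "w ! (Transposition.transpose a b y) = w ! y" for y
    using assms(2) by (cases "y = a"; cases "y = b") auto
  ultimately show ?thesis unfolding place_perm_def by simp
qed

lemma words_repeated_letter:
  assumes "w \<in> words n r" "P \<subseteq> {..<r}" "n < card P"
  obtains a b where "a \<in> P" "b \<in> P" "a \<noteq> b" "w ! a = w ! b"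
proof -
  have "(\<lambda>i. w ! i) ` P \<subseteq> {..<n}"
    using assms(1,2) unfolding words_def by (auto dest!: nth_mem)
  then have "card ((\<lambda>i. w ! i) ` P) < card P"
    using assms(3) by (metis card_lessThan card_mono finite_lessThan le_less_trans)
  then have "\<not> inj_on (\<lambda>i. w ! i) P"
    using card_image by fastforce
  then show ?thesis using that unfolding inj_on_def by blast
qed

lemma Phi_even_odd_sum_eq:
  assumes "\<sigma> \<in> perms r" "P \<subseteq> {..<r}" "n < card P"
  shows "(\<Sum>\<pi> | \<pi> permutes P \<and> evenperm \<pi>. Phi n r (\<sigma> \<circ> \<pi>) :: 'a::comm_ring_1 word_matrix)
       = (\<Sum>\<pi> | \<pi> permutes P \<and> \<not> evenperm \<pi>. Phi n r (\<sigma> \<circ> \<pi>))"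
    (is "?even = ?odd")
proof (intro ext)
  fix v w
  show "?even v w = ?odd v w"
  proof (cases "w \<in> words n r")
    case False
    then show ?thesis by (simp add: sum_fun_apply2 Phi_def)
  next
    case True
    obtain a b where ab: "a \<in> P" "b \<in> P" "a \<noteq> b" "w ! a = w ! b"
      using words_repeated_letter[OF True assms(2,3)] .
    define t where "t = Transposition.transpose a b"
    have bij: "bij_betw (\<lambda>\<pi>. \<pi> \<circ> t) {\<pi>. \<pi> permutes P \<and> evenperm \<pi>} {\<pi>. \<pi> permutes P \<and> \<not> evenperm \<pi>}"
      unfolding t_def using assms(2) ab finite_subset by (intro bij_betw_comp_swap_evenperm) auto
    have swap_invariant: "(Phi n r (\<sigma> \<circ> (\<pi> \<circ> t)) :: 'a word_matrix) v w = Phi n r (\<sigma> \<circ> \<pi>) v w"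
      if "\<pi> permutes P" for \<pi>
    proof -
      have "bij (\<sigma> \<circ> \<pi>)"
        using perms_comp_permutes[OF assms(1) that assms(2)] unfolding perms_def
        by (auto intro: permutes_bij)
      then have "place_perm (\<sigma> \<circ> \<pi> \<circ> t) w = place_perm (\<sigma> \<circ> \<pi>) w"
        unfolding t_def using ab(4) by (rule place_perm_comp_transpose)
      then show ?thesis by (simp add: Phi_def comp_assoc)
    qed
    have "?odd v w = (\<Sum>\<pi> | \<pi> permutes P \<and> evenperm \<pi>. (Phi n r (\<sigma> \<circ> (\<pi> \<circ> t)) :: 'a word_matrix) v w)"
      using sum.reindex_bij_betw[OF bij, of "\<lambda>\<pi>. (Phi n r (\<sigma> \<circ> \<pi>) :: 'a word_matrix) v w"]
      by (simp add: sum_fun_apply2)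
    also have "\<dots> = ?even v w"
      by (simp add: sum_fun_apply2 swap_invariant)
    finally show ?thesis ..
  qed
qed

lemma Phi_in_span_moved:
  assumes "\<sigma> \<in> perms r" "S \<subseteq> {..<r}" "n < card S"
  shows "(Phi n r \<sigma> :: 'a::comm_ring_1 word_matrix)
           \<in> mat.span (Phi n r ` {\<sigma> \<circ> \<pi> |\<pi>. \<pi> permutes S \<and> \<pi> \<noteq> id})"
proof -
  define evens where "evens = {\<pi>. \<pi> permutes S \<and> evenperm \<pi>}"
  define odds where "odds = {\<pi>. \<pi> permutes S \<and> \<not> evenperm \<pi>}"
  let ?span = "mat.span (Phi n r ` {\<sigma> \<circ> \<pi> |\<pi>. \<pi> permutes S \<and> \<pi> \<noteq> id}) :: 'a word_matrix set"
  have "finite evens"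
    unfolding evens_def using finite_permutations[OF finite_subset[OF assms(2)]] by simp
  moreover have "id \<in> evens"
    unfolding evens_def by (simp add: permutes_id)
  ultimately have "(\<Sum>\<pi>\<in>evens. Phi n r (\<sigma> \<circ> \<pi>))
      = (Phi n r \<sigma> :: 'a word_matrix) + (\<Sum>\<pi>\<in>evens - {id}. Phi n r (\<sigma> \<circ> \<pi>))"
    by (simp add: sum.remove)
  then have straighten: "(Phi n r \<sigma> :: 'a word_matrix)
      = (\<Sum>\<pi>\<in>odds. Phi n r (\<sigma> \<circ> \<pi>)) - (\<Sum>\<pi>\<in>evens - {id}. Phi n r (\<sigma> \<circ> \<pi>))"
    using Phi_even_odd_sum_eq[OF assms, where 'a='a] unfolding evens_def odds_def
    by (simp add: algebra_simps)
  have moved: "(Phi n r (\<sigma> \<circ> \<pi>) :: 'a word_matrix) \<in> ?span" if "\<pi> permutes S" "\<pi> \<noteq> id" for \<pi>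
    using that by (intro mat.span_base) blast
  have "(\<Sum>\<pi>\<in>odds. Phi n r (\<sigma> \<circ> \<pi>)) \<in> ?span"
    by (intro mat.span_sum moved) (auto simp: odds_def permutes_id)
  moreover have "(\<Sum>\<pi>\<in>evens - {id}. Phi n r (\<sigma> \<circ> \<pi>)) \<in> ?span"
    by (intro mat.span_sum moved) (auto simp: evens_def)
  ultimately show ?thesis by (subst straighten) (rule mat.span_diff)
qed

lemma Phi_in_span_lis_le:
  assumes "\<sigma> \<in> perms r"
  shows "(Phi n r \<sigma> :: 'a::comm_ring_1 word_matrix) \<in> mat.span (Phi n r ` {\<tau>\<in>perms r. lis_le n r \<tau>})"
  using assms
proof (induction "card {\<tau>\<in>perms r. lex_less \<sigma> \<tau>}" arbitrary: \<sigma> rule: less_induct)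
  case less
  let ?span = "mat.span (Phi n r ` {\<tau>\<in>perms r. lis_le n r \<tau>}) :: 'a word_matrix set"
  show ?case
  proof (cases "lis_le n r \<sigma>")
    case True
    then show ?thesis using less.prems by (intro mat.span_base) auto
  next
    case False
    then obtain S where S: "S \<subseteq> {..<r}" "strict_mono_on S \<sigma>" "n < card S"
      unfolding lis_le_def by (auto simp: not_le)
    have "Phi n r (\<sigma> \<circ> \<pi>) \<in> ?span" if "\<pi> permutes S" "\<pi> \<noteq> id" for \<pi>
    proof -
      have "lex_less \<sigma> (\<sigma> \<circ> \<pi>)" using lex_less_comp_strict_mono_on[OF that S(2)] .
      then have "{\<tau>\<in>perms r. lex_less (\<sigma> \<circ> \<pi>) \<tau>} \<subset> {\<tau>\<in>perms r. lex_less \<sigma> \<tau>}"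
        using perms_comp_permutes[OF less.prems that(1) S(1)] lex_less_trans lex_less_irrefl by blast
      then have "card {\<tau>\<in>perms r. lex_less (\<sigma> \<circ> \<pi>) \<tau>} < card {\<tau>\<in>perms r. lex_less \<sigma> \<tau>}"
        using finite_perms by (intro psubset_card_mono) auto
      then show ?thesis using less.hyps perms_comp_permutes[OF less.prems that(1) S(1)] by blast
    qed
    then have "mat.span (Phi n r ` {\<sigma> \<circ> \<pi> |\<pi>. \<pi> permutes S \<and> \<pi> \<noteq> id}) \<subseteq> ?span"
      by (intro mat.span_minimal) auto
    then show ?thesis using Phi_in_span_moved[OF less.prems S(1,3)] by blast
  qed
qed

definition incr_ending :: "(nat \<Rightarrow> nat) \<Rightarrow> nat \<Rightarrow> nat set set" where
  "incr_ending \<sigma> i = {S. S \<subseteq> {..i} \<and> i \<in> S \<and> strict_mono_on S \<sigma>}"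

definition lis_end :: "(nat \<Rightarrow> nat) \<Rightarrow> nat \<Rightarrow> nat" where
  "lis_end \<sigma> i = Max (card ` incr_ending \<sigma> i)"

lemma finite_incr_ending: "finite (incr_ending \<sigma> i)"
  unfolding incr_ending_def by (rule finite_subset[of _ "Pow {..i}"]) auto

lemma singleton_incr_ending: "{i} \<in> incr_ending \<sigma> i"
  by (auto simp: incr_ending_def strict_mono_on_def)

lemma lis_end_witness:
  obtains S where "S \<in> incr_ending \<sigma> i" "card S = lis_end \<sigma> i"
proof -
  have "lis_end \<sigma> i \<in> card ` incr_ending \<sigma> i"
    unfolding lis_end_def using finite_incr_ending singleton_incr_ending[of i \<sigma>] by (intro Max_in) auto
  then show ?thesis using that by (metis imageE)
qed

lemma lis_end_ge: "S \<in> incr_ending \<sigma> i \<Longrightarrow> card S \<le> lis_end \<sigma> i"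
  unfolding lis_end_def using finite_incr_ending by (intro Max_ge) auto

lemma lis_end_pos: "1 \<le> lis_end \<sigma> i"
  using lis_end_ge[OF singleton_incr_ending[of i \<sigma>]] by simp

lemma lis_end_le:
  assumes "lis_le n r \<sigma>" "i < r"
  shows "lis_end \<sigma> i \<le> n"
proof -
  obtain S where S: "S \<in> incr_ending \<sigma> i" "card S = lis_end \<sigma> i"
    using lis_end_witness .
  then have "S \<subseteq> {..<r}" using assms(2) by (auto simp: incr_ending_def)
  then show ?thesis using assms(1) S unfolding lis_le_def incr_ending_def by auto
qed

lemma lis_end_less:
  assumes "i < j" "\<sigma> i < \<sigma> j"
  shows "lis_end \<sigma> i < lis_end \<sigma> j"
proof -
  obtain S where S: "S \<in> incr_ending \<sigma> i" "card S = lis_end \<sigma> i"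
    using lis_end_witness .
  then have S_le: "S \<subseteq> {..i}" and "i \<in> S" and mono: "strict_mono_on S \<sigma>"
    unfolding incr_ending_def by auto
  have below_j: "\<sigma> a < \<sigma> j" if "a \<in> S" for a
    using strict_mono_onD[OF mono that \<open>i \<in> S\<close>] S_le that assms(2) by (cases "a = i") auto
  have "strict_mono_on (insert j S) \<sigma>"
  proof (rule strict_mono_onI)
    fix a b assume "a \<in> insert j S" "b \<in> insert j S" "a < b"
    then show "\<sigma> a < \<sigma> b"
      using S_le assms(1) below_j strict_mono_onD[OF mono] by auto
  qed
  then have "insert j S \<in> incr_ending \<sigma> j"
    using S_le assms(1) unfolding incr_ending_def by auto
  moreover have "card (insert j S) = Suc (card S)"
    using S_le assms(1) finite_subset[OF S_le finite_atMost] by (subst card_insert_disjoint) auto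
  ultimately show ?thesis using lis_end_ge S(2) by fastforce
qed

text \<open>The \<open>i\<close>-th letter of \<open>lis_word \<sigma> r\<close> is the pile on which patience sorting puts \<open>\<sigma> i\<close>.\<close>

definition lis_word :: "(nat \<Rightarrow> nat) \<Rightarrow> nat \<Rightarrow> nat list" where
  "lis_word \<sigma> r = map (\<lambda>i. lis_end \<sigma> i - 1) [0..<r]"

lemma lis_word_in_words:
  assumes "lis_le n r \<sigma>"
  shows "lis_word \<sigma> r \<in> words n r"
proof -
  have "lis_end \<sigma> i - 1 < n" if "i < r" for i
    using lis_end_le[OF assms that] lis_end_pos[of \<sigma> i] by linarith
  then show ?thesis by (auto simp: words_def lis_word_def)
qed

lemma place_perm_in_words:
  assumes "\<sigma> \<in> perms r" "w \<in> words n r"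
  shows "place_perm \<sigma> w \<in> words n r"
proof -
  have "w ! (inv \<sigma> i) < n" if "i < r" for i
  proof -
    have "inv \<sigma> i < length w" using assms(2) perms_inv_less[OF assms(1) that] by (simp add: words_def)
    then show ?thesis using nth_mem assms(2) by (fastforce simp: words_def)
  qed
  then show ?thesis using assms(2) unfolding words_def place_perm_def by auto
qed

lemma Phi_lis_word_diag:
  assumes "\<sigma> \<in> perms r" "lis_le n r \<sigma>"
  shows "(Phi n r \<sigma> (place_perm \<sigma> (lis_word \<sigma> r)) (lis_word \<sigma> r) :: 'a::comm_ring_1) = 1"
  using lis_word_in_words[OF assms(2)] place_perm_in_words[OF assms(1) lis_word_in_words[OF assms(2)]]
  by (simp add: Phi_def)

lemma Phi_lis_word_lex_less:
  assumes \<sigma>: "\<sigma> \<in> perms r" and \<tau>: "\<tau> \<in> perms r" and "\<tau> \<noteq> \<sigma>"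
    and nz: "(Phi n r \<tau> (place_perm \<sigma> (lis_word \<sigma> r)) (lis_word \<sigma> r) :: 'a::comm_ring_1) \<noteq> 0"
  shows "lex_less \<tau> \<sigma>"
proof -
  define w where "w = lis_word \<sigma> r"
  have "place_perm \<sigma> w = place_perm \<tau> w"
    using nz unfolding w_def by (auto simp: Phi_def split: if_splits)
  then have same_letter: "w ! (inv \<sigma> i) = w ! (inv \<tau> i)" if "i < r" for i
    using arg_cong[of _ _ "\<lambda>u. u ! i"] that by (simp add: place_perm_def w_def lis_word_def)
  have sp: "\<sigma> permutes {..<r}" "\<tau> permutes {..<r}" using \<sigma> \<tau> by (auto simp: perms_def)
  define \<pi> where "\<pi> = inv \<sigma> \<circ> \<tau>"
  have \<pi>: "\<pi> permutes {..<r}" unfolding \<pi>_def using sp by (simp add: permutes_compose permutes_inv)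
  have \<sigma>\<pi>: "\<sigma> (\<pi> x) = \<tau> x" for x unfolding \<pi>_def using sp(1) by (simp add: permutes_inverses)
  have "\<pi> \<noteq> id"
  proof
    assume "\<pi> = id"
    then have "\<tau> = \<sigma>" using \<sigma>\<pi> by (metis id_apply ext)
    then show False using \<open>\<tau> \<noteq> \<sigma>\<close> by simp
  qed
  then obtain p where p: "p < r" "\<pi> p < r" "p < \<pi> p" "\<forall>i<p. \<pi> i = i"
    using least_moved_point[OF \<pi>] by (metis lessThan_iff)
  have "w ! (\<pi> p) = w ! p"
    using same_letter[OF perms_less[OF \<tau> p(1)]] sp unfolding \<pi>_def by (simp add: permutes_inverses)
  then have "lis_end \<sigma> (\<pi> p) = lis_end \<sigma> p"
    using p(1,2) lis_end_pos[of \<sigma> p] lis_end_pos[of \<sigma> "\<pi> p"] by (simp add: w_def lis_word_def)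
  then have "\<not> \<sigma> p < \<sigma> (\<pi> p)" using lis_end_less[of p "\<pi> p" \<sigma>] p(3) by auto
  moreover have "\<sigma> p \<noteq> \<sigma> (\<pi> p)" using p(3) inj_eq[OF perms_inj[OF \<sigma>]] by simp
  ultimately have "\<tau> p < \<sigma> p" using \<sigma>\<pi>[of p] by simp
  moreover have "\<forall>i<p. \<tau> i = \<sigma> i" using \<sigma>\<pi> p(4) by metis
  ultimately show ?thesis unfolding lex_less_def by auto
qed

lemma inj_on_Phi_lis_le:
  "inj_on (Phi n r :: _ \<Rightarrow> 'a::comm_ring_1 word_matrix) {\<tau>\<in>perms r. lis_le n r \<tau>}"
proof (rule inj_onI, rule ccontr)
  fix \<sigma> \<tau> assume \<sigma>: "\<sigma> \<in> {\<tau>\<in>perms r. lis_le n r \<tau>}" and \<tau>: "\<tau> \<in> {\<tau>\<in>perms r. lis_le n r \<tau>}"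
    and eq: "(Phi n r \<sigma> :: 'a word_matrix) = Phi n r \<tau>" and "\<sigma> \<noteq> \<tau>"
  have "lex_less \<tau> \<sigma>"
    using Phi_lis_word_diag[of \<sigma> r n, where 'a='a] eq \<sigma> \<tau> \<open>\<sigma> \<noteq> \<tau>\<close>
    by (intro Phi_lis_word_lex_less[where n=n and 'a='a]) auto
  moreover have "lex_less \<sigma> \<tau>"
    using Phi_lis_word_diag[of \<tau> r n, where 'a='a] eq \<sigma> \<tau> \<open>\<sigma> \<noteq> \<tau>\<close>
    by (intro Phi_lis_word_lex_less[where n=n and 'a='a]) auto
  ultimately show False using lex_less_trans lex_less_irrefl by blast
qed

lemma Phi_lis_le_coeffs_zero:
  fixes n r :: nat and c :: "(nat \<Rightarrow> nat) \<Rightarrow> 'a::comm_ring_1"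
  defines "G \<equiv> {\<tau>\<in>perms r. lis_le n r \<tau>}"
  assumes sum0: "(\<Sum>\<tau>\<in>G. mscale (c \<tau>) (Phi n r \<tau>)) = 0" and "\<tau> \<in> G"
  shows "c \<tau> = 0"
proof (rule ccontr)
  define rank where "rank \<tau> = card {\<rho>\<in>perms r. lex_less \<rho> \<tau>}" for \<tau>
  assume "c \<tau> \<noteq> 0"
  then obtain \<sigma> where \<sigma>: "\<sigma> \<in> G" "c \<sigma> \<noteq> 0"
    and min: "\<And>\<tau>. \<tau> \<in> G \<Longrightarrow> c \<tau> \<noteq> 0 \<Longrightarrow> rank \<sigma> \<le> rank \<tau>"
    using ex_has_least_nat[of "\<lambda>\<tau>. \<tau> \<in> G \<and> c \<tau> \<noteq> 0" \<tau> rank] \<open>\<tau> \<in> G\<close> by blast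
  have \<sigma>G: "\<sigma> \<in> perms r" "lis_le n r \<sigma>" using \<sigma>(1) unfolding G_def by auto
  let ?entry = "\<lambda>\<tau>. (Phi n r \<tau> (place_perm \<sigma> (lis_word \<sigma> r)) (lis_word \<sigma> r) :: 'a)"
  have others: "c \<tau> * ?entry \<tau> = 0" if "\<tau> \<in> G" "\<tau> \<noteq> \<sigma>" for \<tau>
  proof (rule ccontr)
    assume nz: "c \<tau> * ?entry \<tau> \<noteq> 0"
    have \<tau>: "\<tau> \<in> perms r" using that(1) unfolding G_def by auto
    then have "lex_less \<tau> \<sigma>" using Phi_lis_word_lex_less[where n=n and 'a='a, OF \<sigma>G(1) \<tau> that(2)] nz
      by (metis mult_zero_right)
    then have "{\<rho>\<in>perms r. lex_less \<rho> \<tau>} \<subset> {\<rho>\<in>perms r. lex_less \<rho> \<sigma>}"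
      using \<tau> lex_less_trans lex_less_irrefl by blast
    then have "rank \<tau> < rank \<sigma>"
      unfolding rank_def using finite_perms by (intro psubset_card_mono) auto
    then show False using min[OF that(1)] nz by fastforce
  qed
  have "finite G" unfolding G_def using finite_perms by auto
  have "0 = (\<Sum>\<tau>\<in>G. mscale (c \<tau>) (Phi n r \<tau>)) (place_perm \<sigma> (lis_word \<sigma> r)) (lis_word \<sigma> r)"
    using sum0 by simp
  also have "\<dots> = (\<Sum>\<tau>\<in>G. c \<tau> * ?entry \<tau>)"
    by (simp add: sum_fun_apply2 mscale_def)
  also have "\<dots> = c \<sigma> * ?entry \<sigma> + (\<Sum>\<tau>\<in>G - {\<sigma>}. c \<tau> * ?entry \<tau>)"
    using sum.remove[OF \<open>finite G\<close> \<sigma>(1)] .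
  also have "\<dots> = c \<sigma> * ?entry \<sigma>"
    using others by (simp add: sum.neutral)
  also have "\<dots> = c \<sigma>" using Phi_lis_word_diag[OF \<sigma>G, where 'a='a] by simp
  finally show False using \<sigma>(2) by simp
qed

lemma independent_Phi_lis_le:
  "\<not> mat.dependent ((Phi n r :: _ \<Rightarrow> 'a::comm_ring_1 word_matrix) ` {\<tau>\<in>perms r. lis_le n r \<tau>})"
proof
  define G where "G = {\<tau>\<in>perms r. lis_le n r \<tau>}"
  have inj: "inj_on (Phi n r :: _ \<Rightarrow> 'a word_matrix) G" unfolding G_def by (rule inj_on_Phi_lis_le)
  assume "mat.dependent ((Phi n r :: _ \<Rightarrow> 'a word_matrix) ` G)"
  moreover have "finite ((Phi n r :: _ \<Rightarrow> 'a word_matrix) ` G)" unfolding G_def using finite_perms by simp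
  ultimately obtain u :: "'a word_matrix \<Rightarrow> 'a"
    where u: "\<exists>v\<in>Phi n r ` G. u v \<noteq> 0" "(\<Sum>v\<in>Phi n r ` G. mscale (u v) v) = 0"
    using mat.dependent_finite by blast
  have "(\<Sum>\<tau>\<in>G. mscale (u (Phi n r \<tau>)) (Phi n r \<tau> :: 'a word_matrix)) = 0"
    using u(2) by (simp add: sum.reindex[OF inj])
  then have "u (Phi n r \<tau>) = 0" if "\<tau> \<in> G" for \<tau>
    using Phi_lis_le_coeffs_zero[where c = "\<lambda>\<tau>. u (Phi n r \<tau>)"] that unfolding G_def by blast
  then show False using u(1) by blast
qed

lemma free_of_rank_span_Phi:
  "free_of_rank (mat.span ((Phi n r :: _ \<Rightarrow> 'a::comm_ring_1 word_matrix) ` {\<sigma>. \<sigma> permutes {..<r}}))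
     (card {\<tau>\<in>perms r. lis_le n r \<tau>})"
proof -
  define G where "G = {\<tau>\<in>perms r. lis_le n r \<tau>}"
  define B where "B = (Phi n r :: _ \<Rightarrow> 'a word_matrix) ` G"
  have span_eq: "mat.span ((Phi n r :: _ \<Rightarrow> 'a word_matrix) ` perms r) = mat.span B"
  proof
    show "mat.span ((Phi n r :: _ \<Rightarrow> 'a word_matrix) ` perms r) \<subseteq> mat.span B"
      unfolding B_def G_def using Phi_in_span_lis_le by (intro mat.span_minimal) auto
    show "mat.span B \<subseteq> mat.span ((Phi n r :: _ \<Rightarrow> 'a word_matrix) ` perms r)"
      unfolding B_def G_def by (rule mat.span_mono) auto
  qed
  have "finite B" unfolding B_def G_def using finite_perms by simp
  moreover have "card B = card G" unfolding B_def G_def using inj_on_Phi_lis_le by (rule card_image)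
  moreover have "B \<subseteq> mat.span ((Phi n r :: _ \<Rightarrow> 'a word_matrix) ` perms r)"
    using span_eq mat.span_superset[of B] by simp
  moreover have "{\<sigma>. \<sigma> permutes {..<r}} = perms r" by (simp add: perms_def)
  ultimately show ?thesis
    unfolding free_of_rank_def G_def[symmetric] using span_eq independent_Phi_lis_le[of n r]
    by (intro exI[of _ B]) (simp add: B_def G_def)
qed
section \<open>Young diagrams and Fomin's local rules\<close>

type_synonym diagram = "(nat \<times> nat) set"

definition young :: "diagram \<Rightarrow> bool" where
  "young D \<longleftrightarrow> finite D \<and> (\<forall>i j i' j'. (i, j) \<in> D \<longrightarrow> i' \<le> i \<longrightarrow> j' \<le> j \<longrightarrow> (i', j') \<in> D)"

lemma youngD: "young D \<Longrightarrow> (i, j) \<in> D \<Longrightarrow> i' \<le> i \<Longrightarrow> j' \<le> j \<Longrightarrow> (i', j') \<in> D"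
  unfolding young_def by blast

lemma young_finite: "young D \<Longrightarrow> finite D"
  unfolding young_def by blast

lemma young_empty: "young {}"
  unfolding young_def by simp

lemma young_Un: "young A \<Longrightarrow> young B \<Longrightarrow> young (A \<union> B)"
  unfolding young_def by blast

lemma young_Int: "young A \<Longrightarrow> young B \<Longrightarrow> young (A \<inter> B)"
  unfolding young_def by blast

definition row_len :: "diagram \<Rightarrow> nat \<Rightarrow> nat" where
  "row_len D k = (LEAST j. (k, j) \<notin> D)"

lemma young_row_iff:
  assumes "young D"
  shows "(k, j) \<in> D \<longleftrightarrow> j < row_len D k"
proof -
  have "\<exists>j. (k, j) \<notin> D"
    using ex_new_if_finite[OF infinite_UNIV_nat finite_imageI[OF young_finite[OF assms], of snd]]
    by force
  then have nin: "(k, row_len D k) \<notin> D" unfolding row_len_def by (rule LeastI_ex)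
  show ?thesis
  proof
    assume "(k, j) \<in> D"
    then show "j < row_len D k"
      using youngD[OF assms, of k j k "row_len D k"] nin by (meson not_le order_refl)
  next
    assume "j < row_len D k"
    then show "(k, j) \<in> D" unfolding row_len_def using not_less_Least by blast
  qed
qed

lemma row_len_eqI:
  assumes "young D" "\<And>j. (k, j) \<in> D \<longleftrightarrow> j < m"
  shows "row_len D k = m"
  using young_row_iff[OF assms(1)] assms(2) by (metis less_irrefl linorder_neqE_nat)

lemma row_len_antimono:
  assumes "young D" "k \<le> k'"
  shows "row_len D k' \<le> row_len D k"
  using youngD[OF assms(1), of k' "row_len D k" k "row_len D k"] assms young_row_iff[OF assms(1)]
  by (meson not_le order_refl)

lemma row_len_empty: "row_len {} k = 0"
  by (rule row_len_eqI[OF young_empty]) simp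

lemma row_len_insert_cell:
  assumes "young \<nu>" "young (insert (k, l) \<nu>)" "(k, l) \<notin> \<nu>"
  shows "row_len \<nu> k = l" "row_len (insert (k, l) \<nu>) k = Suc l"
    "\<And>k'. k' \<noteq> k \<Longrightarrow> row_len (insert (k, l) \<nu>) k' = row_len \<nu> k'"
proof -
  have row_k: "(k, j) \<in> \<nu> \<longleftrightarrow> j < l" for j
    using youngD[OF assms(1), of k j k l] youngD[OF assms(2), of k l k j] assms(3)
    by (cases "j < l") auto
  show "row_len \<nu> k = l" by (rule row_len_eqI[OF assms(1) row_k])
  show "row_len (insert (k, l) \<nu>) k = Suc l"
    by (rule row_len_eqI[OF assms(2)]) (auto simp: row_k)
  fix k' assume "k' \<noteq> k"
  then show "row_len (insert (k, l) \<nu>) k' = row_len \<nu> k'"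
    by (intro row_len_eqI[OF assms(2)]) (auto simp: young_row_iff[OF assms(1)])
qed

definition cover_eq :: "diagram \<Rightarrow> diagram \<Rightarrow> bool" where
  "cover_eq \<nu> \<mu> \<longleftrightarrow> \<mu> = \<nu> \<or> (\<exists>a. a \<notin> \<nu> \<and> \<mu> = insert a \<nu>)"

lemma cover_eq_subset: "cover_eq \<nu> \<mu> \<Longrightarrow> \<nu> \<subseteq> \<mu>"
  unfolding cover_eq_def by auto

lemma cover_eq_card_eq: "cover_eq \<nu> \<mu> \<Longrightarrow> finite \<nu> \<Longrightarrow> card \<mu> = card \<nu> \<Longrightarrow> \<mu> = \<nu>"
  unfolding cover_eq_def by auto

lemma cover_eq_card_Suc:
  "cover_eq \<nu> \<mu> \<Longrightarrow> finite \<nu> \<Longrightarrow> card \<mu> = Suc (card \<nu>) \<Longrightarrow> \<exists>a. a \<notin> \<nu> \<and> \<mu> = insert a \<nu>"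
  unfolding cover_eq_def by auto

definition add_row_cell :: "diagram \<Rightarrow> nat \<Rightarrow> diagram" where
  "add_row_cell D k = insert (k, row_len D k) D"

lemma add_row_cell_notin: "young D \<Longrightarrow> (k, row_len D k) \<notin> D"
  using young_row_iff by blast

lemma add_row_cell_neq: "young \<mu> \<Longrightarrow> add_row_cell \<mu> k \<noteq> \<mu>"
  using add_row_cell_notin unfolding add_row_cell_def by blast

lemma add_row_cell_inj: "young \<mu> \<Longrightarrow> add_row_cell \<mu> k = add_row_cell \<mu> k' \<Longrightarrow> k = k'"
  using add_row_cell_notin unfolding add_row_cell_def by (metis insertE insertI1 prod.inject)

lemma young_add_row_cell:
  assumes y: "young D" and c: "k = 0 \<or> row_len D k < row_len D (k - 1)"
  shows "young (add_row_cell D k)"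
  unfolding young_def add_row_cell_def
proof (intro conjI allI impI)
  show "finite (insert (k, row_len D k) D)" using young_finite[OF y] by simp
  fix i j i' j'
  assume ij: "(i, j) \<in> insert (k, row_len D k) D" and le: "i' \<le> i" "j' \<le> j"
  show "(i', j') \<in> insert (k, row_len D k) D"
  proof (cases "(i, j) \<in> D")
    case True then show ?thesis using youngD[OF y True le] by simp
  next
    case False
    then have ij': "i = k" "j = row_len D k" using ij by auto
    show ?thesis
    proof (cases "i' = k")
      case True
      then show ?thesis using le ij' young_row_iff[OF y] by auto
    next
      case False
      then have "i' < k" using le ij' by auto
      then have "row_len D k < row_len D (k - 1)" using c by simp
      moreover have "row_len D (k - 1) \<le> row_len D i'"
        using row_len_antimono[OF y] \<open>i' < k\<close> by simp
      ultimately have "row_len D k < row_len D i'" by simp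
      then show ?thesis using le ij' young_row_iff[OF y] by simp
    qed
  qed
qed

lemma add_row_cell_props:
  assumes "young D" "k = 0 \<or> row_len D k < row_len D (k - 1)"
  shows "young (add_row_cell D k)" "cover_eq D (add_row_cell D k)" "card (add_row_cell D k) = Suc (card D)"
    "row_len (add_row_cell D k) 0 = (if k = 0 then Suc (row_len D 0) else row_len D 0)"
proof -
  show y: "young (add_row_cell D k)" using young_add_row_cell[OF assms] .
  show "cover_eq D (add_row_cell D k)"
    unfolding add_row_cell_def cover_eq_def using add_row_cell_notin[OF assms(1)] by blast
  show "card (add_row_cell D k) = Suc (card D)"
    unfolding add_row_cell_def using add_row_cell_notin[OF assms(1)] young_finite[OF assms(1)] by simp
  show "row_len (add_row_cell D k) 0 = (if k = 0 then Suc (row_len D 0) else row_len D 0)"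
    by (rule row_len_eqI[OF y]) (auto simp: add_row_cell_def young_row_iff[OF assms(1)])
qed

text \<open>Fomin's local rule for the square with corners \<open>\<nu>\<close> (lower left), \<open>\<mu>\<close>, \<open>\<eta>\<close> and the new
  corner; the flag \<open>x\<close> records whether the square carries a point of the permutation.\<close>

definition fomin_rule :: "diagram \<Rightarrow> diagram \<Rightarrow> diagram \<Rightarrow> bool \<Rightarrow> diagram" where
  "fomin_rule \<nu> \<mu> \<eta> x = (if \<mu> \<noteq> \<eta> then \<mu> \<union> \<eta>
     else if \<mu> \<noteq> \<nu> then add_row_cell \<mu> (Suc (fst (the_elem (\<mu> - \<nu>))))
     else if x then add_row_cell \<mu> 0 else \<mu>)"

definition fomin_ok :: "diagram \<Rightarrow> diagram \<Rightarrow> diagram \<Rightarrow> bool \<Rightarrow> bool" where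
  "fomin_ok \<nu> \<mu> \<eta> x \<longleftrightarrow>
     young \<nu> \<and> young \<mu> \<and> young \<eta> \<and> cover_eq \<nu> \<mu> \<and> cover_eq \<nu> \<eta> \<and> (x \<longrightarrow> \<mu> = \<nu> \<and> \<eta> = \<nu>)"

lemma fomin_ok_cases:
  assumes "fomin_ok \<nu> \<mu> \<eta> x"
  obtains (distinct) "\<mu> \<noteq> \<eta>" "\<nu> = \<mu> \<inter> \<eta>" "\<not> x"
    | (bump) a where "\<mu> = \<eta>" "a \<notin> \<nu>" "\<mu> = insert a \<nu>" "\<not> x"
    | (equal) "\<mu> = \<eta>" "\<mu> = \<nu>"
  using assms unfolding fomin_ok_def cover_eq_def by blast

lemma fomin_rule_bump:
  assumes "a \<notin> \<nu>" "\<mu> = insert a \<nu>"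
  shows "fomin_rule \<nu> \<mu> \<mu> x = add_row_cell \<mu> (Suc (fst a))"
proof -
  have "\<mu> - \<nu> = {a}" using assms by auto
  then show ?thesis unfolding fomin_rule_def using assms by auto
qed

lemma fomin_rule_bump_props:
  assumes "young \<nu>" "young \<mu>" "a \<notin> \<nu>" "\<mu> = insert a \<nu>"
  shows "young (add_row_cell \<mu> (Suc (fst a)))" "cover_eq \<mu> (add_row_cell \<mu> (Suc (fst a)))"
    "card (add_row_cell \<mu> (Suc (fst a))) = Suc (card \<mu>)"
    "row_len (add_row_cell \<mu> (Suc (fst a))) 0 = row_len \<mu> 0"
proof -
  obtain k l where a: "a = (k, l)" by (cases a)
  have "row_len \<nu> k = l" "row_len \<mu> k = Suc l" "row_len \<mu> (Suc k) = row_len \<nu> (Suc k)"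
    using row_len_insert_cell[of \<nu> k l] assms a by auto
  then have "row_len \<mu> (Suc k) < row_len \<mu> (Suc k - 1)"
    using row_len_antimono[OF assms(1), of k "Suc k"] by simp
  then show "young (add_row_cell \<mu> (Suc (fst a)))" "cover_eq \<mu> (add_row_cell \<mu> (Suc (fst a)))"
    "card (add_row_cell \<mu> (Suc (fst a))) = Suc (card \<mu>)"
    "row_len (add_row_cell \<mu> (Suc (fst a))) 0 = row_len \<mu> 0"
    using add_row_cell_props[OF assms(2), of "Suc k"] a by auto
qed

lemma cover_eq_Un:
  assumes "cover_eq (\<mu> \<inter> \<eta>) \<eta>"
  shows "cover_eq \<mu> (\<mu> \<union> \<eta>)"
proof (cases "\<eta> \<subseteq> \<mu>")
  case True
  then show ?thesis unfolding cover_eq_def by (simp add: Un_absorb2)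
next
  case False
  with assms obtain a where a: "a \<notin> \<mu> \<inter> \<eta>" "\<eta> = insert a (\<mu> \<inter> \<eta>)"
    unfolding cover_eq_def by blast
  then have "a \<notin> \<mu>" "\<mu> \<union> \<eta> = insert a \<mu>" by blast+
  then show ?thesis unfolding cover_eq_def by blast
qed

lemma young_Un_props:
  assumes "young \<mu>" "young \<eta>" "cover_eq (\<mu> \<inter> \<eta>) \<mu>" "cover_eq (\<mu> \<inter> \<eta>) \<eta>"
  shows "young (\<mu> \<union> \<eta>)" "cover_eq \<mu> (\<mu> \<union> \<eta>)" "cover_eq \<eta> (\<mu> \<union> \<eta>)"
    "card (\<mu> \<union> \<eta>) + card (\<mu> \<inter> \<eta>) = card \<mu> + card \<eta>"
    "row_len (\<mu> \<union> \<eta>) 0 = max (row_len \<mu> 0) (row_len \<eta> 0)"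
proof -
  show y: "young (\<mu> \<union> \<eta>)" using assms(1,2) by (rule young_Un)
  show "cover_eq \<mu> (\<mu> \<union> \<eta>)" using cover_eq_Un[OF assms(4)] .
  show "cover_eq \<eta> (\<mu> \<union> \<eta>)" using cover_eq_Un[of \<eta> \<mu>] assms(3) by (simp add: Int_commute Un_commute)
  show "card (\<mu> \<union> \<eta>) + card (\<mu> \<inter> \<eta>) = card \<mu> + card \<eta>"
    using card_Un_Int[OF young_finite[OF assms(1)] young_finite[OF assms(2)]] by simp
  show "row_len (\<mu> \<union> \<eta>) 0 = max (row_len \<mu> 0) (row_len \<eta> 0)"
    by (rule row_len_eqI[OF y]) (auto simp: young_row_iff[OF assms(1)] young_row_iff[OF assms(2)])
qed

lemma fomin_rule_props:
  assumes "fomin_ok \<nu> \<mu> \<eta> x"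
  defines "\<rho> \<equiv> fomin_rule \<nu> \<mu> \<eta> x"
  shows "young \<rho>" "cover_eq \<mu> \<rho>" "cover_eq \<eta> \<rho>"
    "card \<rho> + card \<nu> = card \<mu> + card \<eta> + (if x then 1 else 0)"
    "row_len \<rho> 0 = (if x then Suc (row_len \<nu> 0) else max (row_len \<mu> 0) (row_len \<eta> 0))"
proof -
  have y: "young \<nu>" "young \<mu>" "young \<eta>" and covers: "cover_eq \<nu> \<mu>" "cover_eq \<nu> \<eta>"
    using assms(1) unfolding fomin_ok_def by auto
  have "young \<rho> \<and> cover_eq \<mu> \<rho> \<and> cover_eq \<eta> \<rho> \<and>
    card \<rho> + card \<nu> = card \<mu> + card \<eta> + (if x then 1 else 0) \<and>
    row_len \<rho> 0 = (if x then Suc (row_len \<nu> 0) else max (row_len \<mu> 0) (row_len \<eta> 0))"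
    using assms(1)
  proof (cases rule: fomin_ok_cases)
    case distinct
    have \<rho>: "\<rho> = \<mu> \<union> \<eta>" unfolding \<rho>_def fomin_rule_def using distinct by simp
    show ?thesis
      using young_Un_props[OF y(2,3)] covers distinct unfolding \<rho> by simp
  next
    case (bump a)
    have \<rho>: "\<rho> = add_row_cell \<mu> (Suc (fst a))"
      unfolding \<rho>_def using fomin_rule_bump[OF bump(2,3)] bump(1) by simp
    have "card \<mu> = Suc (card \<nu>)" using bump(2,3) young_finite[OF y(1)] by simp
    then show ?thesis
      using fomin_rule_bump_props[OF y(1,2) bump(2,3)] bump(1,4) unfolding \<rho> by simp
  next
    case equal
    show ?thesis
    proof (cases x)
      case True
      have \<rho>: "\<rho> = add_row_cell \<mu> 0" unfolding \<rho>_def fomin_rule_def using equal True by simp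
      show ?thesis
        using add_row_cell_props[OF y(2), of 0] equal True unfolding \<rho> by simp
    next
      case False
      have "\<rho> = \<mu>" unfolding \<rho>_def fomin_rule_def using equal False by simp
      then show ?thesis using y equal False by (simp add: cover_eq_def)
    qed
  qed
  then show "young \<rho>" "cover_eq \<mu> \<rho>" "cover_eq \<eta> \<rho>"
    "card \<rho> + card \<nu> = card \<mu> + card \<eta> + (if x then 1 else 0)"
    "row_len \<rho> 0 = (if x then Suc (row_len \<nu> 0) else max (row_len \<mu> 0) (row_len \<eta> 0))"
    by auto
qed

lemma cover_eq_unique_row:
  assumes "young \<nu>" "young \<nu>'" "young \<mu>" "a \<notin> \<nu>" "\<mu> = insert a \<nu>" "b \<notin> \<nu>'" "\<mu> = insert b \<nu>'"
    and "fst a = fst b"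
  shows "\<nu> = \<nu>'"
proof -
  obtain k l l' where ab: "a = (k, l)" "b = (k, l')" using assms(8) by (cases a, cases b) auto
  have "row_len \<mu> k = Suc l" "row_len \<mu> k = Suc l'"
    using row_len_insert_cell(2)[of \<nu> k l] row_len_insert_cell(2)[of \<nu>' k l'] assms ab by auto
  then have "a = b" using ab by simp
  then show ?thesis using assms(4-7) by (metis Diff_insert_absorb)
qed

lemma fomin_rule_inj:
  assumes ok: "fomin_ok \<nu> \<mu> \<eta> x" and ok': "fomin_ok \<nu>' \<mu> \<eta> x'"
    and eq: "fomin_rule \<nu> \<mu> \<eta> x = fomin_rule \<nu>' \<mu> \<eta> x'"
  shows "\<nu> = \<nu>' \<and> x = x'"
proof (cases "\<mu> = \<eta>")
  case False
  with ok ok' show ?thesis by (auto elim: fomin_ok_cases)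
next
  case True
  have y: "young \<nu>" "young \<nu>'" "young \<mu>" using ok ok' unfolding fomin_ok_def by auto
  have neq: "add_row_cell \<mu> (Suc k) \<noteq> add_row_cell \<mu> 0" "add_row_cell \<mu> k \<noteq> \<mu>" for k
    using add_row_cell_inj[OF y(3), of "Suc k" 0] add_row_cell_neq[OF y(3)] by auto
  show ?thesis
    using ok
  proof (cases rule: fomin_ok_cases)
    case (bump a)
    show ?thesis
      using ok'
    proof (cases rule: fomin_ok_cases)
      case bump': (bump b)
      have "add_row_cell \<mu> (Suc (fst a)) = add_row_cell \<mu> (Suc (fst b))"
        using eq fomin_rule_bump[OF bump(2,3)] fomin_rule_bump[OF bump'(2,3)] True by simp
      then have "fst a = fst b" using add_row_cell_inj[OF y(3)] by blast
      then show ?thesis using cover_eq_unique_row[OF y bump(2,3) bump'(2,3)] bump(4) bump'(4) by simp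
    next
      case equal
      then show ?thesis
        using eq fomin_rule_bump[OF bump(2,3)] neq True unfolding fomin_rule_def by (auto split: if_splits)
    qed (use True in simp)
  next
    case equal
    show ?thesis
      using ok'
    proof (cases rule: fomin_ok_cases)
      case (bump b)
      then show ?thesis
        using eq fomin_rule_bump[OF bump(2,3)] neq True equal unfolding fomin_rule_def
        by (auto split: if_splits)
    next
      case equal': equal
      then show ?thesis
        using eq neq True equal unfolding fomin_rule_def by (auto split: if_splits)
    qed (use True in simp)
  qed (use True in simp)
qed

lemma cover_eq_Int:
  assumes "cover_eq \<mu> \<rho>" "cover_eq \<eta> \<rho>" "\<mu> \<noteq> \<eta>"
  shows "cover_eq (\<mu> \<inter> \<eta>) \<mu> \<and> cover_eq (\<mu> \<inter> \<eta>) \<eta> \<and> \<mu> \<union> \<eta> = \<rho>"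
proof (cases "\<rho> = \<mu> \<or> \<rho> = \<eta>")
  case True
  then show ?thesis using assms unfolding cover_eq_def by auto
next
  case False
  then obtain a b where ab: "a \<notin> \<mu>" "\<rho> = insert a \<mu>" "b \<notin> \<eta>" "\<rho> = insert b \<eta>"
    using assms(1,2) unfolding cover_eq_def by blast
  then have "a \<noteq> b" using assms(3) by (metis Diff_insert_absorb)
  then have "b \<in> \<mu>" "a \<in> \<eta>"
    using ab by (metis insertCI insertE)+
  moreover have "\<mu> \<subseteq> insert b \<eta>" "\<eta> \<subseteq> insert a \<mu>"
    using ab(2,4) by (metis subset_insertI)+
  ultimately have "\<mu> = insert b (\<mu> \<inter> \<eta>)" "\<eta> = insert a (\<mu> \<inter> \<eta>)" "\<mu> \<union> \<eta> = \<rho>"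
    using ab by blast+
  then show ?thesis using ab unfolding cover_eq_def by blast
qed

lemma young_Diff_row_end:
  assumes y: "young \<mu>" and m: "row_len \<mu> k = Suc m" and "(Suc k, m) \<notin> \<mu>"
  shows "young (\<mu> - {(k, m)})"
  unfolding young_def
proof (intro conjI allI impI)
  show "finite (\<mu> - {(k, m)})" using young_finite[OF y] by simp
  fix i j i' j' assume ij: "(i, j) \<in> \<mu> - {(k, m)}" and le: "i' \<le> i" "j' \<le> j"
  have "(i', j') \<noteq> (k, m)"
  proof
    assume "(i', j') = (k, m)"
    then have "i' = k" "j' = m" by auto
    show False
    proof (cases "i = k")
      case True
      then show False using ij le \<open>j' = m\<close> m young_row_iff[OF y, of k j] by auto
    next
      case False
      then have "(Suc k, m) \<in> \<mu>" using youngD[OF y, of i j "Suc k" m] ij le \<open>i' = k\<close> \<open>j' = m\<close> by auto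
      then show False using assms(3) by simp
    qed
  qed
  then show "(i', j') \<in> \<mu> - {(k, m)}" using youngD[OF y _ le] ij by auto
qed

lemma fomin_rule_bump_inv:
  assumes y: "young \<mu>" "(Suc k, l) \<notin> \<mu>" "young (insert (Suc k, l) \<mu>)"
  obtains \<nu> where "fomin_ok \<nu> \<mu> \<mu> False" "fomin_rule \<nu> \<mu> \<mu> False = insert (Suc k, l) \<mu>"
proof -
  \<comment> \<open>The new cell in row \<open>k + 1\<close> was bumped by the last cell of row \<open>k\<close>.\<close>
  have l: "row_len \<mu> (Suc k) = l" using row_len_insert_cell(1)[of \<mu> "Suc k" l] y by simp
  have "(k, l) \<in> \<mu>" using youngD[OF y(3), of "Suc k" l k l] y(2) by auto
  then have "l < row_len \<mu> k" using young_row_iff[OF y(1)] by simp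
  define m where "m = row_len \<mu> k - 1"
  have m: "row_len \<mu> k = Suc m" "l \<le> m" using \<open>l < row_len \<mu> k\<close> unfolding m_def by auto
  have c: "(k, m) \<in> \<mu>" using young_row_iff[OF y(1)] m(1) by simp
  have "(Suc k, m) \<notin> \<mu>" using young_row_iff[OF y(1)] l m(2) by simp
  then have "young (\<mu> - {(k, m)})" using young_Diff_row_end[OF y(1) m(1)] by blast
  moreover have "cover_eq (\<mu> - {(k, m)}) \<mu>"
    unfolding cover_eq_def using insert_Diff[OF c] by blast
  ultimately have "fomin_ok (\<mu> - {(k, m)}) \<mu> \<mu> False"
    unfolding fomin_ok_def using y(1) by simp
  moreover have "fomin_rule (\<mu> - {(k, m)}) \<mu> \<mu> False = insert (Suc k, l) \<mu>"
    using fomin_rule_bump[of "(k, m)" "\<mu> - {(k, m)}" \<mu>] insert_Diff[OF c] l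
    by (simp add: add_row_cell_def)
  ultimately show ?thesis using that by blast
qed

lemma fomin_rule_surj:
  assumes y: "young \<mu>" "young \<eta>" "young \<rho>" and covers: "cover_eq \<mu> \<rho>" "cover_eq \<eta> \<rho>"
  shows "\<exists>\<nu> x. fomin_ok \<nu> \<mu> \<eta> x \<and> fomin_rule \<nu> \<mu> \<eta> x = \<rho>"
proof (cases "\<mu> = \<eta>")
  case False
  have "fomin_ok (\<mu> \<inter> \<eta>) \<mu> \<eta> False"
    unfolding fomin_ok_def using y(1,2) young_Int cover_eq_Int[OF covers False] by simp
  moreover have "fomin_rule (\<mu> \<inter> \<eta>) \<mu> \<eta> False = \<rho>"
    unfolding fomin_rule_def using False cover_eq_Int[OF covers False] by simp
  ultimately show ?thesis by blast
next
  case True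
  then have ok: "fomin_ok \<mu> \<mu> \<eta> x" for x
    unfolding fomin_ok_def using y by (simp add: cover_eq_def)
  show ?thesis
  proof (cases "\<rho> = \<mu>")
    case True
    then have "fomin_rule \<mu> \<mu> \<eta> False = \<rho>" unfolding fomin_rule_def using \<open>\<mu> = \<eta>\<close> by simp
    then show ?thesis using ok by blast
  next
    case False
    then obtain k l where kl: "(k, l) \<notin> \<mu>" "\<rho> = insert (k, l) \<mu>"
      using covers(1) unfolding cover_eq_def by auto
    show ?thesis
    proof (cases k)
      case 0
      have "row_len \<mu> k = l" using row_len_insert_cell(1)[of \<mu> k l] y kl by simp
      then have "fomin_rule \<mu> \<mu> \<eta> True = \<rho>"
        unfolding fomin_rule_def add_row_cell_def using \<open>\<mu> = \<eta>\<close> kl 0 by simp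
      then show ?thesis using ok by blast
    next
      case (Suc k')
      obtain \<nu> where "fomin_ok \<nu> \<mu> \<mu> False" "fomin_rule \<nu> \<mu> \<mu> False = insert (Suc k', l) \<mu>"
        by (rule fomin_rule_bump_inv[of \<mu> k' l]) (use y(1,3) kl Suc in auto)
      then show ?thesis using kl(2) Suc \<open>\<mu> = \<eta>\<close> by blast
    qed
  qed
qed

section \<open>Growth diagrams of permutations\<close>

definition below :: "(nat \<Rightarrow> nat) \<Rightarrow> nat \<Rightarrow> nat \<Rightarrow> nat set" where
  "below \<sigma> i j = {a. a < i \<and> \<sigma> a < j}"

definition incr_below :: "(nat \<Rightarrow> nat) \<Rightarrow> nat \<Rightarrow> nat \<Rightarrow> nat set set" where
  "incr_below \<sigma> i j = {S. S \<subseteq> below \<sigma> i j \<and> strict_mono_on S \<sigma>}"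

definition lis_below :: "(nat \<Rightarrow> nat) \<Rightarrow> nat \<Rightarrow> nat \<Rightarrow> nat" where
  "lis_below \<sigma> i j = Max (card ` incr_below \<sigma> i j)"

lemma finite_below: "finite (below \<sigma> i j)"
  unfolding below_def by (rule finite_subset[of _ "{..<i}"]) auto

lemma finite_incr_below: "finite (incr_below \<sigma> i j)"
  unfolding incr_below_def by (rule finite_subset[of _ "Pow (below \<sigma> i j)"]) (auto simp: finite_below)

lemma empty_in_incr_below: "{} \<in> incr_below \<sigma> i j"
  unfolding incr_below_def by simp

lemma finite_in_incr_below: "S \<in> incr_below \<sigma> i j \<Longrightarrow> finite S"
  unfolding incr_below_def using finite_below finite_subset by blast

lemma lis_below_ge: "S \<in> incr_below \<sigma> i j \<Longrightarrow> card S \<le> lis_below \<sigma> i j"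
  unfolding lis_below_def using finite_incr_below by (intro Max_ge) auto

lemma lis_below_witness:
  obtains S where "S \<in> incr_below \<sigma> i j" "card S = lis_below \<sigma> i j"
proof -
  have "lis_below \<sigma> i j \<in> card ` incr_below \<sigma> i j"
    unfolding lis_below_def using finite_incr_below empty_in_incr_below[of \<sigma> i j] by (intro Max_in) auto
  then show ?thesis using that by (metis imageE)
qed

lemma lis_below_eqI:
  assumes "\<And>S. S \<in> incr_below \<sigma> i j \<Longrightarrow> card S \<le> m" "W \<in> incr_below \<sigma> i j" "card W = m"
  shows "lis_below \<sigma> i j = m"
proof (rule antisym)
  obtain S where "S \<in> incr_below \<sigma> i j" "card S = lis_below \<sigma> i j"
    by (rule lis_below_witness)
  then show "lis_below \<sigma> i j \<le> m" using assms(1) by metis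
  show "m \<le> lis_below \<sigma> i j" using lis_below_ge[OF assms(2)] assms(3) by simp
qed

lemma below_0 [simp]: "below \<sigma> 0 j = {}" "below \<sigma> i 0 = {}"
  unfolding below_def by auto

lemma lis_below_0 [simp]: "lis_below \<sigma> 0 j = 0" "lis_below \<sigma> i 0 = 0"
  unfolding lis_below_def incr_below_def by auto

lemma card_below_Suc: "card (below \<sigma> (Suc i) j) = card (below \<sigma> i j) + (if \<sigma> i < j then 1 else 0)"
proof -
  have "below \<sigma> (Suc i) j = (if \<sigma> i < j then insert i (below \<sigma> i j) else below \<sigma> i j)"
    unfolding below_def using less_Suc_eq by auto
  moreover have "i \<notin> below \<sigma> i j" unfolding below_def by simp
  ultimately show ?thesis using finite_below by simp
qed

lemma below_Suc_right_point:
  assumes "inj \<sigma>" "\<sigma> i = j"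
  shows "below \<sigma> i (Suc j) = below \<sigma> i j"
  using assms unfolding below_def inj_def by (auto simp: less_Suc_eq)

lemma lis_below_point:
  assumes "inj \<sigma>" "\<sigma> i = j"
  shows "lis_below \<sigma> (Suc i) (Suc j) = Suc (lis_below \<sigma> i j)"
proof -
  have below_Suc: "below \<sigma> (Suc i) (Suc j) = insert i (below \<sigma> i j)"
    using below_Suc_right_point[OF assms] assms(2) unfolding below_def by (auto simp: less_Suc_eq)
  obtain S0 where S0: "S0 \<in> incr_below \<sigma> i j" "card S0 = lis_below \<sigma> i j"
    using lis_below_witness .
  have "i \<notin> S0" using S0(1) unfolding incr_below_def below_def by auto
  show ?thesis
  proof (rule lis_below_eqI[where W = "insert i S0"])
    fix S assume S: "S \<in> incr_below \<sigma> (Suc i) (Suc j)"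
    then have "S - {i} \<in> incr_below \<sigma> i j"
      unfolding incr_below_def below_Suc by (auto intro: monotone_on_subset)
    then have "card (S - {i}) \<le> lis_below \<sigma> i j" by (rule lis_below_ge)
    then show "card S \<le> Suc (lis_below \<sigma> i j)"
      using card_Suc_Diff1[OF finite_in_incr_below[OF S], of i] by (cases "i \<in> S") auto
  next
    have "S0 \<subseteq> below \<sigma> i j" and mono: "strict_mono_on S0 \<sigma>" using S0(1) unfolding incr_below_def by auto
    then have below_i: "\<sigma> a < \<sigma> i \<and> a < i" if "a \<in> S0" for a using that assms(2) unfolding below_def by auto
    have "strict_mono_on (insert i S0) \<sigma>"
    proof (rule strict_mono_onI)
      fix a b assume "a \<in> insert i S0" "b \<in> insert i S0" "a < b"
      then show "\<sigma> a < \<sigma> b" using below_i strict_mono_onD[OF mono] by (metis insertE not_less_iff_gr_or_eq)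
    qed
    then show "insert i S0 \<in> incr_below \<sigma> (Suc i) (Suc j)"
      unfolding incr_below_def below_Suc using \<open>S0 \<subseteq> below \<sigma> i j\<close> by auto
  next
    show "card (insert i S0) = Suc (lis_below \<sigma> i j)"
      using finite_in_incr_below[OF S0(1)] \<open>i \<notin> S0\<close> S0(2) by simp
  qed
qed

lemma incr_below_no_point:
  assumes "\<sigma> i \<noteq> j"
  shows "incr_below \<sigma> (Suc i) (Suc j) = incr_below \<sigma> (Suc i) j \<union> incr_below \<sigma> i (Suc j)"
proof
  show "incr_below \<sigma> (Suc i) j \<union> incr_below \<sigma> i (Suc j) \<subseteq> incr_below \<sigma> (Suc i) (Suc j)"
    unfolding incr_below_def below_def by auto
  show "incr_below \<sigma> (Suc i) (Suc j) \<subseteq> incr_below \<sigma> (Suc i) j \<union> incr_below \<sigma> i (Suc j)"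
  proof
    fix S assume S: "S \<in> incr_below \<sigma> (Suc i) (Suc j)"
    then have sub: "S \<subseteq> below \<sigma> (Suc i) (Suc j)" and mono: "strict_mono_on S \<sigma>"
      unfolding incr_below_def by auto
    show "S \<in> incr_below \<sigma> (Suc i) j \<union> incr_below \<sigma> i (Suc j)"
    proof (cases "i \<in> S")
      case False
      then have "S \<subseteq> below \<sigma> i (Suc j)" using sub unfolding below_def by (auto simp: less_Suc_eq)
      then show ?thesis using mono unfolding incr_below_def by auto
    next
      case True
      then have "\<sigma> i < j" using sub assms unfolding below_def by auto
      moreover have "\<sigma> a \<le> \<sigma> i" if "a \<in> S" for a
        using strict_mono_onD[OF mono that True] sub that unfolding below_def
        by (cases "a = i") (auto simp: less_Suc_eq)
      ultimately have "S \<subseteq> below \<sigma> (Suc i) j" using sub unfolding below_def by fastforce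
      then show ?thesis using mono unfolding incr_below_def by auto
    qed
  qed
qed

lemma lis_below_no_point:
  assumes "\<sigma> i \<noteq> j"
  shows "lis_below \<sigma> (Suc i) (Suc j) = max (lis_below \<sigma> (Suc i) j) (lis_below \<sigma> i (Suc j))"
  unfolding lis_below_def incr_below_no_point[of \<sigma> i j, OF assms] image_Un
  using finite_incr_below empty_in_incr_below[of \<sigma> "Suc i" j] empty_in_incr_below[of \<sigma> i "Suc j"]
  by (intro Max_Un) auto

fun growth :: "(nat \<Rightarrow> nat) \<Rightarrow> nat \<Rightarrow> nat \<Rightarrow> diagram" where
  "growth \<sigma> 0 j = {}"
| "growth \<sigma> (Suc i) 0 = {}"
| "growth \<sigma> (Suc i) (Suc j) =
     fomin_rule (growth \<sigma> i j) (growth \<sigma> (Suc i) j) (growth \<sigma> i (Suc j)) (\<sigma> i = j)"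

lemma growth_0_right [simp]: "growth \<sigma> i 0 = {}"
  by (cases i) auto

lemma fomin_ok_growth_square:
  assumes "inj \<sigma>" "young \<nu>" "young \<mu>" "young \<eta>" "cover_eq \<nu> \<mu>" "cover_eq \<nu> \<eta>"
    and "card \<nu> = card (below \<sigma> i j)" "card \<mu> = card (below \<sigma> (Suc i) j)"
    "card \<eta> = card (below \<sigma> i (Suc j))"
  shows "fomin_ok \<nu> \<mu> \<eta> (\<sigma> i = j)"
  unfolding fomin_ok_def
proof (intro conjI impI)
  assume "\<sigma> i = j"
  then have "card \<mu> = card \<nu>" using assms(7,8) card_below_Suc[of \<sigma> i j] by simp
  then show "\<mu> = \<nu>" using cover_eq_card_eq[OF assms(5) young_finite[OF assms(2)]] by simp
  have "card \<eta> = card \<nu>" using assms(7,9) below_Suc_right_point[OF assms(1) \<open>\<sigma> i = j\<close>] by simp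
  then show "\<eta> = \<nu>" using cover_eq_card_eq[OF assms(6) young_finite[OF assms(2)]] by simp
qed (use assms in auto)

lemma growth_props:
  assumes "inj \<sigma>"
  shows "young (growth \<sigma> i j) \<and> card (growth \<sigma> i j) = card (below \<sigma> i j)
    \<and> row_len (growth \<sigma> i j) 0 = lis_below \<sigma> i j
    \<and> (0 < i \<longrightarrow> cover_eq (growth \<sigma> (i - 1) j) (growth \<sigma> i j))
    \<and> (0 < j \<longrightarrow> cover_eq (growth \<sigma> i (j - 1)) (growth \<sigma> i j))"
proof (induction i arbitrary: j)
  case 0
  show ?case by (simp add: young_empty row_len_empty cover_eq_def)
next
  case (Suc i)
  note outer = Suc.IH
  show ?case
  proof (induction j)
    case 0
    show ?case by (simp add: young_empty row_len_empty cover_eq_def)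
  next
    case (Suc j)
    define \<nu> where "\<nu> = growth \<sigma> i j"
    define \<mu> where "\<mu> = growth \<sigma> (Suc i) j"
    define \<eta> where "\<eta> = growth \<sigma> i (Suc j)"
    have \<nu>: "young \<nu>" "card \<nu> = card (below \<sigma> i j)" "row_len \<nu> 0 = lis_below \<sigma> i j"
      using outer[of j] unfolding \<nu>_def by auto
    have \<mu>: "young \<mu>" "card \<mu> = card (below \<sigma> (Suc i) j)" "row_len \<mu> 0 = lis_below \<sigma> (Suc i) j"
      "cover_eq \<nu> \<mu>"
      using Suc.IH unfolding \<mu>_def \<nu>_def by auto
    have \<eta>: "young \<eta>" "card \<eta> = card (below \<sigma> i (Suc j))" "row_len \<eta> 0 = lis_below \<sigma> i (Suc j)"
      "cover_eq \<nu> \<eta>"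
      using outer[of "Suc j"] unfolding \<eta>_def \<nu>_def by auto
    have ok: "fomin_ok \<nu> \<mu> \<eta> (\<sigma> i = j)"
      using fomin_ok_growth_square[OF assms \<nu>(1) \<mu>(1) \<eta>(1) \<mu>(4) \<eta>(4) \<nu>(2) \<mu>(2) \<eta>(2)] .
    have g: "growth \<sigma> (Suc i) (Suc j) = fomin_rule \<nu> \<mu> \<eta> (\<sigma> i = j)"
      unfolding \<nu>_def \<mu>_def \<eta>_def by simp
    note new = fomin_rule_props[OF ok, folded g]
    have "card (growth \<sigma> (Suc i) (Suc j)) = card (below \<sigma> (Suc i) (Suc j))"
      using new(4) \<nu>(2) \<mu>(2) \<eta>(2) card_below_Suc[of \<sigma> i] by auto
    moreover have "row_len (growth \<sigma> (Suc i) (Suc j)) 0 = lis_below \<sigma> (Suc i) (Suc j)"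
      using new(5) \<nu>(3) \<mu>(3) \<eta>(3) lis_below_point[OF assms] lis_below_no_point by auto
    ultimately show ?case using new(1-3) unfolding \<mu>_def \<eta>_def by simp
  qed
qed

lemma growth_fomin_ok:
  assumes "inj \<sigma>"
  shows "fomin_ok (growth \<sigma> i j) (growth \<sigma> (Suc i) j) (growth \<sigma> i (Suc j)) (\<sigma> i = j)"
  using growth_props[OF assms, of i j] growth_props[OF assms, of "Suc i" j]
    growth_props[OF assms, of i "Suc j"]
  by (intro fomin_ok_growth_square[OF assms]) auto

definition sat_chains :: "nat \<Rightarrow> diagram \<Rightarrow> (nat \<Rightarrow> diagram) set" where
  "sat_chains r D = {t. t 0 = {} \<and> (\<forall>k. young (t k)) \<and>
     (\<forall>k<r. \<exists>a. a \<notin> t k \<and> t (Suc k) = insert a (t k)) \<and> (\<forall>k\<ge>r. t k = D)}"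

lemma sat_chains_last: "t \<in> sat_chains r D \<Longrightarrow> r \<le> k \<Longrightarrow> t k = D"
  unfolding sat_chains_def by auto

lemma sat_chains_young: "t \<in> sat_chains r D \<Longrightarrow> young (t k)"
  unfolding sat_chains_def by auto

lemma sat_chains_cover_eq: "t \<in> sat_chains r D \<Longrightarrow> cover_eq (t k) (t (Suc k))"
  unfolding sat_chains_def cover_eq_def by (cases "k < r") auto

lemma sat_chains_card: "t \<in> sat_chains r D \<Longrightarrow> k \<le> r \<Longrightarrow> card (t k) = k"
proof (induction k)
  case 0
  then show ?case unfolding sat_chains_def by simp
next
  case (Suc k)
  then have "k < r" by simp
  then obtain a where "a \<notin> t k" "t (Suc k) = insert a (t k)"
    using Suc.prems(1) unfolding sat_chains_def by blast
  then show ?case using Suc young_finite[OF sat_chains_young[OF Suc.prems(1)]] by simp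
qed

lemma sat_chains_card_last: "t \<in> sat_chains r D \<Longrightarrow> card D = r"
  using sat_chains_card[of t r D r] sat_chains_last[of t r D r] by simp

lemma sat_chains_mono:
  assumes "t \<in> sat_chains r D" "k \<le> k'"
  shows "t k \<subseteq> t k'"
  using assms(2)
proof (induction k' rule: dec_induct)
  case (step m)
  then show ?case using cover_eq_subset[OF sat_chains_cover_eq[OF assms(1), of m]] by blast
qed simp

lemma sat_chains_subset: "t \<in> sat_chains r D \<Longrightarrow> t k \<subseteq> D"
  using sat_chains_mono[of t r D k "max k r"] sat_chains_last[of t r D "max k r"] by simp

lemma finite_sat_chains:
  assumes "finite D"
  shows "finite (sat_chains r D)"
proof -
  have inj: "inj_on (\<lambda>t. restrict t {..r}) (sat_chains r D)"
  proof (rule inj_onI, rule ext)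
    fix t t' k assume t: "t \<in> sat_chains r D" and t': "t' \<in> sat_chains r D"
      and eq: "restrict t {..r} = restrict t' {..r}"
    show "t k = t' k"
    proof (cases "k \<le> r")
      case True
      then show ?thesis using fun_cong[OF eq, of k] by simp
    next
      case False
      then show ?thesis using sat_chains_last[OF t] sat_chains_last[OF t'] by simp
    qed
  qed
  have "restrict t {..r} \<in> PiE {..r} (\<lambda>_. Pow D)" if "t \<in> sat_chains r D" for t
    using sat_chains_subset[OF that] by auto
  then have "(\<lambda>t. restrict t {..r}) ` sat_chains r D \<subseteq> PiE {..r} (\<lambda>_. Pow D)" by blast
  moreover have "finite (PiE {..r} (\<lambda>_. Pow D))" using assms by (simp add: finite_PiE)
  ultimately have "finite ((\<lambda>t. restrict t {..r}) ` sat_chains r D)" by (rule finite_subset)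
  then show ?thesis by (rule finite_imageD[OF _ inj])
qed

definition top_chain :: "(nat \<Rightarrow> nat) \<Rightarrow> nat \<Rightarrow> nat \<Rightarrow> diagram" where
  "top_chain \<sigma> r = (\<lambda>k. growth \<sigma> (min k r) r)"

definition right_chain :: "(nat \<Rightarrow> nat) \<Rightarrow> nat \<Rightarrow> nat \<Rightarrow> diagram" where
  "right_chain \<sigma> r = (\<lambda>k. growth \<sigma> r (min k r))"

lemma card_below_top: "\<sigma> \<in> perms r \<Longrightarrow> k \<le> r \<Longrightarrow> card (below \<sigma> k r) = k"
proof -
  assume "\<sigma> \<in> perms r" "k \<le> r"
  then have "below \<sigma> k r = {..<k}" unfolding below_def using perms_less by fastforce
  then show ?thesis by simp
qed

lemma card_below_right:
  assumes \<sigma>: "\<sigma> \<in> perms r" and "j \<le> r"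
  shows "card (below \<sigma> r j) = j"
proof -
  have inv: "\<sigma> (inv \<sigma> b) = b" "inv \<sigma> (\<sigma> a) = a" for a b
    using \<sigma> unfolding perms_def by (auto simp: permutes_inverses)
  have "below \<sigma> r j = inv \<sigma> ` {..<j}"
  proof
    show "below \<sigma> r j \<subseteq> inv \<sigma> ` {..<j}"
      unfolding below_def using inv(2)
      by (metis (no_types, lifting) image_eqI lessThan_iff mem_Collect_eq subsetI)
    show "inv \<sigma> ` {..<j} \<subseteq> below \<sigma> r j"
      unfolding below_def using inv(1) perms_inv_less[OF \<sigma>] \<open>j \<le> r\<close> by auto
  qed
  moreover have "inj (inv \<sigma>)" using inv by (metis injI)
  ultimately show ?thesis by (simp add: card_image inj_on_subset)
qed

lemma top_chain_sat:
  assumes "\<sigma> \<in> perms r"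
  shows "top_chain \<sigma> r \<in> sat_chains r (growth \<sigma> r r)"
proof -
  note props = growth_props[OF perms_inj[OF assms]]
  have "\<exists>a. a \<notin> growth \<sigma> k r \<and> growth \<sigma> (Suc k) r = insert a (growth \<sigma> k r)" if "k < r" for k
    using props[of "Suc k" r] props[of k r] card_below_top[OF assms] that young_finite
    by (intro cover_eq_card_Suc) auto
  then show ?thesis unfolding sat_chains_def top_chain_def using props by auto
qed

lemma right_chain_sat:
  assumes "\<sigma> \<in> perms r"
  shows "right_chain \<sigma> r \<in> sat_chains r (growth \<sigma> r r)"
proof -
  note props = growth_props[OF perms_inj[OF assms]]
  have "\<exists>a. a \<notin> growth \<sigma> r k \<and> growth \<sigma> r (Suc k) = insert a (growth \<sigma> r k)" if "k < r" for k
    using props[of r "Suc k"] props[of r k] card_below_right[OF assms] that young_finite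
    by (intro cover_eq_card_Suc) auto
  then show ?thesis unfolding sat_chains_def right_chain_def using props by auto
qed

text \<open>By \<open>fomin_rule_inj\<close> the local rule can be run backwards, so the diagrams on the top row
  and the right column determine the whole grid and the points of the permutation.\<close>

lemma growth_eq_of_boundary:
  assumes "inj \<sigma>" "inj \<tau>"
    and top: "\<And>i. i \<le> r \<Longrightarrow> growth \<sigma> i r = growth \<tau> i r"
    and right: "\<And>j. j \<le> r \<Longrightarrow> growth \<sigma> r j = growth \<tau> r j"
  shows "i \<le> r \<Longrightarrow> j \<le> r \<Longrightarrow> growth \<sigma> i j = growth \<tau> i j \<and> (i < r \<longrightarrow> j < r \<longrightarrow> (\<sigma> i = j \<longleftrightarrow> \<tau> i = j))"
proof (induction "(r - i) + (r - j)" arbitrary: i j rule: less_induct)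
  case less
  show ?case
  proof (cases "i = r \<or> j = r")
    case True
    then show ?thesis using top right less.prems by auto
  next
    case False
    then have "i < r" "j < r" using less.prems by auto
    then have eqs: "growth \<sigma> (Suc i) j = growth \<tau> (Suc i) j" "growth \<sigma> i (Suc j) = growth \<tau> i (Suc j)"
      "growth \<sigma> (Suc i) (Suc j) = growth \<tau> (Suc i) (Suc j)"
      using less.hyps[of "Suc i" j] less.hyps[of i "Suc j"] less.hyps[of "Suc i" "Suc j"] by auto
    let ?\<mu> = "growth \<sigma> (Suc i) j" and ?\<eta> = "growth \<sigma> i (Suc j)"
    have ok: "fomin_ok (growth \<sigma> i j) ?\<mu> ?\<eta> (\<sigma> i = j)"
      using growth_fomin_ok[OF assms(1)] .
    have ok': "fomin_ok (growth \<tau> i j) ?\<mu> ?\<eta> (\<tau> i = j)"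
      using growth_fomin_ok[OF assms(2), of i j] eqs(1,2) by simp
    have "fomin_rule (growth \<sigma> i j) ?\<mu> ?\<eta> (\<sigma> i = j) = fomin_rule (growth \<tau> i j) ?\<mu> ?\<eta> (\<tau> i = j)"
      using eqs by simp
    then show ?thesis using fomin_rule_inj[OF ok ok'] by simp
  qed
qed

lemma boundary_chains_inj:
  assumes \<sigma>: "\<sigma> \<in> perms r" and \<tau>: "\<tau> \<in> perms r"
    and "top_chain \<sigma> r = top_chain \<tau> r" "right_chain \<sigma> r = right_chain \<tau> r"
  shows "\<sigma> = \<tau>"
proof
  fix i
  have eq: "growth \<sigma> i j = growth \<tau> i j \<and> (i < r \<longrightarrow> j < r \<longrightarrow> (\<sigma> i = j \<longleftrightarrow> \<tau> i = j))"
    if "i \<le> r" "j \<le> r" for i j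
    using assms(3,4) that unfolding top_chain_def right_chain_def
    by (intro growth_eq_of_boundary[OF perms_inj[OF \<sigma>] perms_inj[OF \<tau>]]) (metis min.absorb1)+
  show "\<sigma> i = \<tau> i"
  proof (cases "i < r")
    case True
    then show ?thesis using eq[of i "\<sigma> i"] perms_less[OF \<sigma> True] by simp
  next
    case False
    then show ?thesis using \<sigma> \<tau> permutes_not_in[of \<sigma> "{..<r}" i] permutes_not_in[of \<tau> "{..<r}" i]
      unfolding perms_def by simp
  qed
qed

definition fomin_rule_inv ::
    "diagram \<Rightarrow> diagram \<Rightarrow> diagram \<Rightarrow> diagram \<times> bool" where
  "fomin_rule_inv \<mu> \<eta> \<rho> = (SOME p. fomin_ok (fst p) \<mu> \<eta> (snd p) \<and> fomin_rule (fst p) \<mu> \<eta> (snd p) = \<rho>)"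

lemma fomin_rule_inv:
  assumes "young \<mu>" "young \<eta>" "young \<rho>" "cover_eq \<mu> \<rho>" "cover_eq \<eta> \<rho>"
  defines "p \<equiv> fomin_rule_inv \<mu> \<eta> \<rho>"
  shows "fomin_ok (fst p) \<mu> \<eta> (snd p)" "fomin_rule (fst p) \<mu> \<eta> (snd p) = \<rho>"
proof -
  obtain \<nu> x where "fomin_ok \<nu> \<mu> \<eta> x \<and> fomin_rule \<nu> \<mu> \<eta> x = \<rho>"
    using fomin_rule_surj[OF assms(1-5)] by blast
  then have "\<exists>p. fomin_ok (fst p) \<mu> \<eta> (snd p) \<and> fomin_rule (fst p) \<mu> \<eta> (snd p) = \<rho>"
    by (intro exI[of _ "(\<nu>, x)"]) simp
  then show "fomin_ok (fst p) \<mu> \<eta> (snd p)" "fomin_rule (fst p) \<mu> \<eta> (snd p) = \<rho>"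
    unfolding p_def fomin_rule_inv_def by (metis (mono_tags, lifting) someI_ex)+
qed

lemma ex1_of_card_1: "card {x. P x} = 1 \<Longrightarrow> \<exists>!x. P x"
  by (metis card_1_singletonE mem_Collect_eq singletonD singletonI)

function regrowth :: "nat \<Rightarrow> (nat \<Rightarrow> diagram) \<Rightarrow> (nat \<Rightarrow> diagram) \<Rightarrow> nat \<Rightarrow> nat \<Rightarrow> diagram" where
  "regrowth r t c i j = (if r \<le> i then c j else if r \<le> j then t i
     else fst (fomin_rule_inv (regrowth r t c (Suc i) j) (regrowth r t c i (Suc j))
                (regrowth r t c (Suc i) (Suc j))))"
  by auto
termination
  by (relation "measure (\<lambda>(r, t, c, i, j). (r - i) + (r - j))") auto

declare regrowth.simps [simp del]

definition regrowth_mark :: "nat \<Rightarrow> (nat \<Rightarrow> diagram) \<Rightarrow> (nat \<Rightarrow> diagram) \<Rightarrow> nat \<Rightarrow> nat \<Rightarrow> bool" where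
  "regrowth_mark r t c i j =
     snd (fomin_rule_inv (regrowth r t c (Suc i) j) (regrowth r t c i (Suc j))
           (regrowth r t c (Suc i) (Suc j)))"

context
  fixes r D t c
  assumes t: "t \<in> sat_chains r D" and c: "c \<in> sat_chains r D"
begin

abbreviation "grid \<equiv> regrowth r t c"
abbreviation "mark \<equiv> regrowth_mark r t c"

lemma grid_right: "grid r j = c j"
  by (simp add: regrowth.simps)

lemma grid_top: "i \<le> r \<Longrightarrow> grid i r = t i"
  using sat_chains_last[OF t, of r] sat_chains_last[OF c, of r]
  by (cases "i = r") (simp_all add: regrowth.simps)

lemma grid_props:
  "i \<le> r \<Longrightarrow> j \<le> r \<Longrightarrow> young (grid i j)
     \<and> (i < r \<longrightarrow> cover_eq (grid i j) (grid (Suc i) j))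
     \<and> (j < r \<longrightarrow> cover_eq (grid i j) (grid i (Suc j)))
     \<and> (i < r \<and> j < r \<longrightarrow> fomin_ok (grid i j) (grid (Suc i) j) (grid i (Suc j)) (mark i j)
          \<and> fomin_rule (grid i j) (grid (Suc i) j) (grid i (Suc j)) (mark i j) = grid (Suc i) (Suc j))"
proof (induction "(r - i) + (r - j)" arbitrary: i j rule: less_induct)
  case less
  consider "i = r" | "i < r" "j = r" | "i < r" "j < r" using less.prems by linarith
  then show ?case
  proof cases
    case 1
    then show ?thesis using sat_chains_young[OF c] sat_chains_cover_eq[OF c] by (simp add: grid_right)
  next
    case 2
    then show ?thesis using sat_chains_young[OF t] sat_chains_cover_eq[OF t] by (simp add: grid_top)
  next
    case 3
    let ?\<mu> = "grid (Suc i) j" and ?\<eta> = "grid i (Suc j)" and ?\<rho> = "grid (Suc i) (Suc j)"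
    have "young ?\<mu>" "young ?\<eta>" "young ?\<rho>" "cover_eq ?\<mu> ?\<rho>" "cover_eq ?\<eta> ?\<rho>"
      using less.hyps[of "Suc i" j] less.hyps[of i "Suc j"] less.hyps[of "Suc i" "Suc j"] 3 by auto
    moreover have "grid i j = fst (fomin_rule_inv ?\<mu> ?\<eta> ?\<rho>)" "mark i j = snd (fomin_rule_inv ?\<mu> ?\<eta> ?\<rho>)"
      using 3 by (simp_all add: regrowth.simps[of r t c i j] regrowth_mark_def)
    ultimately show ?thesis using fomin_rule_inv[of ?\<mu> ?\<eta> ?\<rho>] 3 unfolding fomin_ok_def by auto
  qed
qed

lemma grid_subset_right: "i \<le> r \<Longrightarrow> j \<le> r \<Longrightarrow> grid i j \<subseteq> grid r j"
proof (induction "r - i" arbitrary: i)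
  case 0
  then show ?case by simp
next
  case (Suc d)
  then have "grid i j \<subseteq> grid (Suc i) j" using grid_props[of i j] cover_eq_subset by auto
  also have "\<dots> \<subseteq> grid r j" using Suc.hyps(1)[of "Suc i"] Suc.hyps(2) Suc.prems by simp
  finally show ?case .
qed

lemma grid_subset_top: "i \<le> r \<Longrightarrow> j \<le> r \<Longrightarrow> grid i j \<subseteq> grid i r"
proof (induction "r - j" arbitrary: j)
  case 0
  then show ?case by simp
next
  case (Suc d)
  then have "grid i j \<subseteq> grid i (Suc j)" using grid_props[of i j] cover_eq_subset by auto
  also have "\<dots> \<subseteq> grid i r" using Suc.hyps(1)[of "Suc j"] Suc.hyps(2) Suc.prems by simp
  finally show ?case .
qed

lemma grid_col0: "i \<le> r \<Longrightarrow> grid i 0 = {}"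
  using grid_subset_right[of i 0] grid_right[of 0] c unfolding sat_chains_def by auto

lemma grid_row0: "j \<le> r \<Longrightarrow> grid 0 j = {}"
  using grid_subset_top[of 0 j] grid_top[of 0] t unfolding sat_chains_def by auto

lemma card_grid_square:
  assumes "i < r" "j < r"
  shows "card (grid (Suc i) (Suc j)) + card (grid i j)
    = card (grid (Suc i) j) + card (grid i (Suc j)) + (if mark i j then 1 else 0)"
  using fomin_rule_props(4)[of "grid i j" "grid (Suc i) j" "grid i (Suc j)" "mark i j"]
    grid_props[of i j] assms
  by auto

lemma card_grid_row:
  assumes "i < r"
  shows "j \<le> r \<Longrightarrow> card (grid (Suc i) j) = card (grid i j) + card {j'. j' < j \<and> mark i j'}"
proof (induction j)
  case 0
  then show ?case using grid_col0 assms by simp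
next
  case (Suc j)
  have "{j'. j' < Suc j \<and> mark i j'}
      = (if mark i j then insert j {j'. j' < j \<and> mark i j'} else {j'. j' < j \<and> mark i j'})"
    using less_Suc_eq by auto
  then show ?case using card_grid_square[OF assms, of j] Suc by auto
qed

lemma card_grid_col:
  assumes "j < r"
  shows "i \<le> r \<Longrightarrow> card (grid i (Suc j)) = card (grid i j) + card {i'. i' < i \<and> mark i' j}"
proof (induction i)
  case 0
  then show ?case using grid_row0 assms by simp
next
  case (Suc i)
  have "{i'. i' < Suc i \<and> mark i' j}
      = (if mark i j then insert i {i'. i' < i \<and> mark i' j} else {i'. i' < i \<and> mark i' j})"
    using less_Suc_eq by auto
  then show ?case using card_grid_square[OF _ assms, of i] Suc by auto
qed

lemma mark_row_unique:
  assumes "i < r"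
  shows "\<exists>!j. j < r \<and> mark i j"
proof (rule ex1_of_card_1)
  show "card {j. j < r \<and> mark i j} = 1"
    using card_grid_row[OF assms, of r] grid_top[of i] grid_top[of "Suc i"] assms
      sat_chains_card[OF t, of i] sat_chains_card[OF t, of "Suc i"]
    by simp
qed

lemma mark_col_unique:
  assumes "j < r"
  shows "\<exists>!i. i < r \<and> mark i j"
proof (rule ex1_of_card_1)
  show "card {i. i < r \<and> mark i j} = 1"
    using card_grid_col[OF assms, of r] grid_right[of j] grid_right[of "Suc j"] assms
      sat_chains_card[OF c, of j] sat_chains_card[OF c, of "Suc j"]
    by simp
qed

definition mark_perm :: "nat \<Rightarrow> nat" where
  "mark_perm i = (if i < r then (THE j. j < r \<and> mark i j) else i)"

lemma mark_perm: "i < r \<Longrightarrow> mark_perm i < r \<and> mark i (mark_perm i)"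
  "i < r \<Longrightarrow> j < r \<Longrightarrow> mark i j \<longleftrightarrow> mark_perm i = j"
  unfolding mark_perm_def using theI'[OF mark_row_unique] the1_equality[OF mark_row_unique] by auto

lemma mark_perm_perms: "mark_perm \<in> perms r"
proof -
  have inj: "inj_on mark_perm {..<r}"
    using mark_perm mark_col_unique by (intro inj_onI) (metis lessThan_iff)
  moreover have "mark_perm ` {..<r} \<subseteq> {..<r}" using mark_perm(1) by auto
  ultimately have "bij_betw mark_perm {..<r} {..<r}"
    using endo_inj_surj[OF finite_lessThan] by (simp add: bij_betw_def)
  moreover have "{x. mark_perm x \<noteq> x} \<subseteq> {..<r}" unfolding mark_perm_def by auto
  ultimately show ?thesis unfolding perms_def by (simp add: permutes_altdef)
qed

lemma growth_mark_perm: "i \<le> r \<Longrightarrow> j \<le> r \<Longrightarrow> growth mark_perm i j = grid i j"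
proof (induction i arbitrary: j)
  case 0
  then show ?case using grid_row0 by simp
next
  case (Suc i)
  note outer = Suc.IH
  show ?case
    using Suc.prems(2)
  proof (induction j)
    case 0
    then show ?case using grid_col0 Suc.prems by simp
  next
    case (Suc j)
    then show ?case
      using outer[of j] outer[of "Suc j"] grid_props[of i j] mark_perm(2)[of i j] \<open>Suc i \<le> r\<close> by simp
  qed
qed

lemma boundary_chains_surj: "\<exists>\<sigma>\<in>perms r. top_chain \<sigma> r = t \<and> right_chain \<sigma> r = c"
proof (intro bexI conjI ext)
  fix k
  show "top_chain mark_perm r k = t k"
    unfolding top_chain_def using growth_mark_perm[of "min k r" r] grid_top[of "min k r"]
      sat_chains_last[OF t, of k] sat_chains_last[OF t, of r]
    by (cases "k \<le> r") auto
  show "right_chain mark_perm r k = c k"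
    unfolding right_chain_def using growth_mark_perm[of r "min k r"] grid_right[of "min k r"]
      sat_chains_last[OF c, of k] sat_chains_last[OF c, of r]
    by (cases "k \<le> r") auto
qed (rule mark_perm_perms)

end

lemma lis_le_iff_growth:
  assumes "\<sigma> \<in> perms r"
  shows "lis_le n r \<sigma> \<longleftrightarrow> row_len (growth \<sigma> r r) 0 \<le> n"
proof -
  have "below \<sigma> r r = {..<r}" unfolding below_def using perms_less[OF assms] by auto
  then have "lis_le n r \<sigma> \<longleftrightarrow> (\<forall>S\<in>incr_below \<sigma> r r. card S \<le> n)"
    unfolding lis_le_def incr_below_def by auto
  also have "\<dots> \<longleftrightarrow> lis_below \<sigma> r r \<le> n"
    unfolding lis_below_def using finite_incr_below empty_in_incr_below[of \<sigma> r r] by (subst Max_le_iff) auto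
  finally show ?thesis using growth_props[OF perms_inj[OF assms], of r r] by simp
qed

lemma young_card_bound:
  assumes "young D" "(i, j) \<in> D"
  shows "i < card D" "j < card D"
proof -
  have "(\<lambda>a. (a, 0)) ` {..i} \<subseteq> D" "(\<lambda>b. (0, b)) ` {..j} \<subseteq> D"
    using youngD[OF assms] by auto
  moreover have "card ((\<lambda>a. (a, 0::nat)) ` {..i}) = Suc i" "card ((\<lambda>b. (0::nat, b)) ` {..j}) = Suc j"
    by (simp_all add: card_image inj_on_def)
  ultimately show "i < card D" "j < card D"
    using card_mono[OF young_finite[OF assms(1)]] by (metis Suc_le_eq)+
qed

definition wide_diagrams :: "nat \<Rightarrow> nat \<Rightarrow> diagram set" where
  "wide_diagrams n r = {D. young D \<and> card D = r \<and> n < row_len D 0}"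

lemma finite_wide_diagrams: "finite (wide_diagrams n r)"
proof (rule finite_subset[of _ "Pow ({..<r} \<times> {..<r})"])
  show "wide_diagrams n r \<subseteq> Pow ({..<r} \<times> {..<r})"
    unfolding wide_diagrams_def using young_card_bound by fastforce
qed simp

lemma bij_betw_boundary_chains:
  "bij_betw (\<lambda>\<sigma>. (top_chain \<sigma> r, right_chain \<sigma> r)) {\<sigma>\<in>perms r. \<not> lis_le n r \<sigma>}
     (\<Union>D\<in>wide_diagrams n r. sat_chains r D \<times> sat_chains r D)"
proof (rule bij_betw_imageI)
  show "inj_on (\<lambda>\<sigma>. (top_chain \<sigma> r, right_chain \<sigma> r)) {\<sigma>\<in>perms r. \<not> lis_le n r \<sigma>}"
    using boundary_chains_inj by (auto simp: inj_on_def)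
  show "(\<lambda>\<sigma>. (top_chain \<sigma> r, right_chain \<sigma> r)) ` {\<sigma>\<in>perms r. \<not> lis_le n r \<sigma>}
      = (\<Union>D\<in>wide_diagrams n r. sat_chains r D \<times> sat_chains r D)"
  proof (intro equalityI subsetI)
    fix p assume "p \<in> (\<lambda>\<sigma>. (top_chain \<sigma> r, right_chain \<sigma> r)) ` {\<sigma>\<in>perms r. \<not> lis_le n r \<sigma>}"
    then obtain \<sigma> where \<sigma>: "\<sigma> \<in> perms r" "\<not> lis_le n r \<sigma>" and p: "p = (top_chain \<sigma> r, right_chain \<sigma> r)"
      by blast
    have "growth \<sigma> r r \<in> wide_diagrams n r"
      unfolding wide_diagrams_def
      using growth_props[OF perms_inj[OF \<sigma>(1)], of r r] sat_chains_card_last[OF top_chain_sat[OF \<sigma>(1)]]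
        lis_le_iff_growth[OF \<sigma>(1)] \<sigma>(2)
      by auto
    then show "p \<in> (\<Union>D\<in>wide_diagrams n r. sat_chains r D \<times> sat_chains r D)"
      using p top_chain_sat[OF \<sigma>(1)] right_chain_sat[OF \<sigma>(1)] by blast
  next
    fix p assume "p \<in> (\<Union>D\<in>wide_diagrams n r. sat_chains r D \<times> sat_chains r D)"
    then obtain D t c where D: "D \<in> wide_diagrams n r" and p: "p = (t, c)"
      and t: "t \<in> sat_chains r D" and c: "c \<in> sat_chains r D"
      by blast
    obtain \<sigma> where \<sigma>: "\<sigma> \<in> perms r" "top_chain \<sigma> r = t" "right_chain \<sigma> r = c"
      using boundary_chains_surj[OF t c] by blast
    have "growth \<sigma> r r = D"
      using fun_cong[OF \<sigma>(2), of r] sat_chains_last[OF t, of r] unfolding top_chain_def by simp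
    then have "\<not> lis_le n r \<sigma>" using lis_le_iff_growth[OF \<sigma>(1)] D unfolding wide_diagrams_def by simp
    then show "p \<in> (\<lambda>\<sigma>. (top_chain \<sigma> r, right_chain \<sigma> r)) ` {\<sigma>\<in>perms r. \<not> lis_le n r \<sigma>}"
      using \<sigma> p by blast
  qed
qed

lemma card_not_lis_le:
  "card {\<sigma>\<in>perms r. \<not> lis_le n r \<sigma>} = (\<Sum>D\<in>wide_diagrams n r. card (sat_chains r D) ^ 2)"
proof -
  have "card {\<sigma>\<in>perms r. \<not> lis_le n r \<sigma>} = card (\<Union>D\<in>wide_diagrams n r. sat_chains r D \<times> sat_chains r D)"
    using bij_betw_same_card[OF bij_betw_boundary_chains] .
  also have "\<dots> = (\<Sum>D\<in>wide_diagrams n r. card (sat_chains r D \<times> sat_chains r D))"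
  proof (rule card_UN_disjoint[OF finite_wide_diagrams])
    show "\<forall>D\<in>wide_diagrams n r. finite (sat_chains r D \<times> sat_chains r D)"
      unfolding wide_diagrams_def using finite_sat_chains young_finite by blast
    show "\<forall>D\<in>wide_diagrams n r. \<forall>D'\<in>wide_diagrams n r. D \<noteq> D' \<longrightarrow>
        (sat_chains r D \<times> sat_chains r D) \<inter> (sat_chains r D' \<times> sat_chains r D') = {}"
      using sat_chains_last by blast
  qed
  finally show ?thesis by (simp add: card_cartesian_product power2_eq_square)
qed

section \<open>Partitions and standard tableaux\<close>

lemma partitions_nth_antimono:
  assumes "lam \<in> partitions r" "i' \<le> i" "i < length lam"
  shows "lam ! i \<le> lam ! i'"
  using assms sorted_wrt_nth_less[of "(\<ge>)" lam i' i] unfolding partitions_def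
  by (cases "i' = i") auto

lemma partitions_nth_pos:
  assumes "lam \<in> partitions r" "i < length lam"
  shows "0 < lam ! i"
proof -
  have "lam ! i \<in> set lam" "0 \<notin> set lam" using assms unfolding partitions_def by auto
  then show ?thesis by (metis gr0I)
qed

lemma young_young_cells: "lam \<in> partitions r \<Longrightarrow> young (young_cells lam)"
  unfolding young_def
proof (intro conjI allI impI)
  assume "lam \<in> partitions r"
  have "young_cells lam = Sigma {..<length lam} (\<lambda>i. {..<lam ! i})"
    unfolding young_cells_def by auto
  then show "finite (young_cells lam)" by auto
  fix i j i' j' assume "(i, j) \<in> young_cells lam" "i' \<le> i" "j' \<le> j"
  then show "(i', j') \<in> young_cells lam"
    using partitions_nth_antimono[OF \<open>lam \<in> partitions r\<close>, of i' i] unfolding young_cells_def by auto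
qed

lemma card_young_cells: "card (young_cells lam) = sum_list lam"
proof -
  have "young_cells lam = Sigma {..<length lam} (\<lambda>i. {..<lam ! i})"
    unfolding young_cells_def by auto
  then show ?thesis by (simp add: sum_list_sum_nth atLeast0LessThan)
qed

lemma row_len_young_cells:
  assumes "lam \<in> partitions r"
  shows "row_len (young_cells lam) k = (if k < length lam then lam ! k else 0)"
  by (rule row_len_eqI[OF young_young_cells[OF assms]]) (auto simp: young_cells_def)

lemma inj_on_young_cells: "inj_on young_cells (partitions r)"
proof (rule inj_onI)
  fix lam mu assume lam: "lam \<in> partitions r" and mu: "mu \<in> partitions r"
    and eq: "young_cells lam = young_cells mu"
  have "(k, 0) \<in> young_cells lam \<longleftrightarrow> k < length lam" "(k, 0) \<in> young_cells mu \<longleftrightarrow> k < length mu" for k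
    using partitions_nth_pos[OF lam] partitions_nth_pos[OF mu] unfolding young_cells_def by auto
  then have len: "length lam = length mu" using eq by (metis linorder_neqE_nat less_irrefl)
  show "lam = mu"
    using row_len_young_cells[OF lam] row_len_young_cells[OF mu] eq len by (intro nth_equalityI) metis+
qed

definition col_len :: "diagram \<Rightarrow> nat" where
  "col_len D = (LEAST i. (i, 0) \<notin> D)"

lemma young_col_iff:
  assumes "young D"
  shows "(i, 0) \<in> D \<longleftrightarrow> i < col_len D"
proof -
  have "\<exists>i. (i, 0) \<notin> D"
    using ex_new_if_finite[OF infinite_UNIV_nat finite_imageI[OF young_finite[OF assms], of fst]]
    by force
  then have nin: "(col_len D, 0) \<notin> D" unfolding col_len_def by (rule LeastI_ex)
  show ?thesis
  proof
    assume "(i, 0) \<in> D"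
    then show "i < col_len D"
      using youngD[OF assms, of i 0 "col_len D" 0] nin by (meson not_le order_refl)
  next
    assume "i < col_len D"
    then show "(i, 0) \<in> D" unfolding col_len_def using not_less_Least by blast
  qed
qed

definition shape_of :: "diagram \<Rightarrow> nat list" where
  "shape_of D = map (row_len D) [0..<col_len D]"

lemma young_cells_shape_of:
  assumes y: "young D"
  shows "young_cells (shape_of D) = D"
proof
  show "young_cells (shape_of D) \<subseteq> D"
    unfolding young_cells_def shape_of_def using young_row_iff[OF y] by auto
  show "D \<subseteq> young_cells (shape_of D)"
  proof
    fix c assume c: "c \<in> D"
    obtain i j where ij: "c = (i, j)" by (cases c)
    have "(i, 0) \<in> D" using youngD[OF y, of i j i 0] c ij by simp
    then show "c \<in> young_cells (shape_of D)"
      using c ij young_row_iff[OF y] young_col_iff[OF y] unfolding young_cells_def shape_of_def by simp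
  qed
qed

lemma shape_of_partitions:
  assumes y: "young D" and "card D = r"
  shows "shape_of D \<in> partitions r"
  unfolding partitions_def
proof (intro CollectI conjI)
  show "sum_list (shape_of D) = r"
    using card_young_cells[of "shape_of D"] young_cells_shape_of[OF y] assms(2) by simp
  show "sorted_wrt (\<ge>) (shape_of D)"
    unfolding shape_of_def sorted_wrt_iff_nth_less using row_len_antimono[OF y] by simp
  show "0 \<notin> set (shape_of D)"
  proof
    assume "0 \<in> set (shape_of D)"
    then obtain k where "k < col_len D" "row_len D k = 0" unfolding shape_of_def by auto
    then show False using young_row_iff[OF y, of k 0] young_col_iff[OF y, of k] by simp
  qed
qed

lemma hd_partitions_row_len:
  assumes "lam \<in> partitions r" "1 \<le> r"
  shows "hd lam = row_len (young_cells lam) 0"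
proof -
  have "lam \<noteq> []" using assms unfolding partitions_def by auto
  then show ?thesis using row_len_young_cells[OF assms(1), of 0] by (simp add: hd_conv_nth)
qed

lemma bij_betw_young_cells:
  assumes "1 \<le> r"
  shows "bij_betw young_cells {lam\<in>partitions r. n < hd lam} (wide_diagrams n r)"
proof (rule bij_betw_imageI)
  show "inj_on young_cells {lam\<in>partitions r. n < hd lam}"
    using inj_on_young_cells by (rule inj_on_subset) auto
  show "young_cells ` {lam\<in>partitions r. n < hd lam} = wide_diagrams n r"
  proof (intro equalityI subsetI)
    fix D assume "D \<in> young_cells ` {lam\<in>partitions r. n < hd lam}"
    then show "D \<in> wide_diagrams n r"
      unfolding wide_diagrams_def using young_young_cells card_young_cells hd_partitions_row_len[OF _ assms]
      by (auto simp: partitions_def)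
  next
    fix D assume "D \<in> wide_diagrams n r"
    then have y: "young D" and "card D = r" "n < row_len D 0" unfolding wide_diagrams_def by auto
    then have "shape_of D \<in> partitions r" "n < hd (shape_of D)"
      using shape_of_partitions hd_partitions_row_len[OF _ assms] young_cells_shape_of[OF y] by auto
    then show "D \<in> young_cells ` {lam\<in>partitions r. n < hd lam}"
      using young_cells_shape_of[OF y] by (metis (mono_tags, lifting) image_eqI mem_Collect_eq)
  qed
qed

definition std_fillings :: "diagram \<Rightarrow> nat \<Rightarrow> ((nat \<times> nat) \<Rightarrow> nat) set" where
  "std_fillings D r = {T. bij_betw T D {1..r} \<and> (\<forall>c. c \<notin> D \<longrightarrow> T c = 0) \<and>
     (\<forall>i j. (i, j) \<in> D \<and> (i, Suc j) \<in> D \<longrightarrow> T (i, j) < T (i, Suc j)) \<and>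
     (\<forall>i j. (i, j) \<in> D \<and> (Suc i, j) \<in> D \<longrightarrow> T (i, j) < T (Suc i, j))}"

lemma standard_tableaux_eq: "standard_tableaux lam = std_fillings (young_cells lam) (sum_list lam)"
  unfolding standard_tableaux_def std_fillings_def ..

lemma std_fillings_bij: "T \<in> std_fillings D r \<Longrightarrow> bij_betw T D {1..r}"
  by (simp add: std_fillings_def)

lemma std_fillings_zero: "T \<in> std_fillings D r \<Longrightarrow> c \<notin> D \<Longrightarrow> T c = 0"
  unfolding std_fillings_def by blast

lemma std_fillings_range: "T \<in> std_fillings D r \<Longrightarrow> c \<in> D \<Longrightarrow> 1 \<le> T c \<and> T c \<le> r"
  using bij_betwE[OF std_fillings_bij] by fastforce

lemma std_fillings_mono_row:
  assumes y: "young D" and T: "T \<in> std_fillings D r"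
  shows "(i, j) \<in> D \<Longrightarrow> j' \<le> j \<Longrightarrow> T (i, j') \<le> T (i, j)"
proof (induction "j - j'" arbitrary: j)
  case (Suc d)
  then obtain j0 where j0: "j = Suc j0" by (cases j) auto
  have c0: "(i, j0) \<in> D" using youngD[OF y Suc.prems(1), of i j0] j0 by simp
  have "T (i, j') \<le> T (i, j0)" using Suc.hyps(1)[of j0] Suc.hyps(2) Suc.prems c0 j0 by simp
  also have "\<dots> < T (i, j)" using T c0 Suc.prems(1) j0 unfolding std_fillings_def by blast
  finally show ?case by simp
qed simp

lemma std_fillings_mono_col:
  assumes y: "young D" and T: "T \<in> std_fillings D r"
  shows "(i, j) \<in> D \<Longrightarrow> i' \<le> i \<Longrightarrow> T (i', j) \<le> T (i, j)"
proof (induction "i - i'" arbitrary: i)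
  case (Suc d)
  then obtain i0 where i0: "i = Suc i0" by (cases i) auto
  have c0: "(i0, j) \<in> D" using youngD[OF y Suc.prems(1), of i0 j] i0 by simp
  have "T (i', j) \<le> T (i0, j)" using Suc.hyps(1)[of i0] Suc.hyps(2) Suc.prems c0 i0 by simp
  also have "\<dots> < T (i, j)" using T c0 Suc.prems(1) i0 unfolding std_fillings_def by blast
  finally show ?case by simp
qed simp

lemma std_fillings_mono:
  assumes "young D" "T \<in> std_fillings D r" "(i, j) \<in> D" "i' \<le> i" "j' \<le> j"
  shows "T (i', j') \<le> T (i, j)"
  using std_fillings_mono_row[OF assms(1,2) youngD[OF assms(1,3) assms(4) order_refl] assms(5)]
    std_fillings_mono_col[OF assms(1-4)]
  by linarith

definition tableau_chain :: "diagram \<Rightarrow> ((nat \<times> nat) \<Rightarrow> nat) \<Rightarrow> nat \<Rightarrow> diagram" where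
  "tableau_chain D T k = {c\<in>D. T c \<le> k}"

definition chain_tableau :: "diagram \<Rightarrow> (nat \<Rightarrow> diagram) \<Rightarrow> (nat \<times> nat) \<Rightarrow> nat" where
  "chain_tableau D t c = (if c \<in> D then (LEAST k. c \<in> t k) else 0)"

lemma tableau_chain_sat:
  assumes y: "young D" and T: "T \<in> std_fillings D r"
  shows "tableau_chain D T \<in> sat_chains r D"
  unfolding sat_chains_def
proof (intro CollectI conjI allI impI)
  show "tableau_chain D T 0 = {}"
    unfolding tableau_chain_def using std_fillings_range[OF T] by (auto simp: not_less_eq_eq[symmetric])
  fix k
  show "young (tableau_chain D T k)"
    unfolding young_def tableau_chain_def
  proof (intro conjI allI impI)
    show "finite {c \<in> D. T c \<le> k}" using young_finite[OF y] by simp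
    fix i j i' j' assume "(i, j) \<in> {c \<in> D. T c \<le> k}" "i' \<le> i" "j' \<le> j"
    then show "(i', j') \<in> {c \<in> D. T c \<le> k}"
      using youngD[OF y] std_fillings_mono[OF y T, of i j i' j'] by auto
  qed
  show "tableau_chain D T k = D" if "r \<le> k"
  proof -
    have "T c \<le> k" if "c \<in> D" for c using std_fillings_range[OF T that] \<open>r \<le> k\<close> by simp
    then show ?thesis unfolding tableau_chain_def by auto
  qed
  assume "k < r"
  then have "Suc k \<in> T ` D" using bij_betw_imp_surj_on[OF std_fillings_bij[OF T]] by auto
  then obtain a where a: "a \<in> D" "T a = Suc k" by (metis imageE)
  have "inj_on T D" using bij_betw_imp_inj_on[OF std_fillings_bij[OF T]] .
  have "{c\<in>D. T c = Suc k} = {a}"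
  proof (intro equalityI subsetI)
    fix c assume "c \<in> {c\<in>D. T c = Suc k}"
    then have "c \<in> D" "T c = T a" using a by auto
    then show "c \<in> {a}" using inj_onD[OF \<open>inj_on T D\<close>] a(1) by blast
  qed (use a in simp)
  moreover have "{c\<in>D. T c \<le> Suc k} = {c\<in>D. T c \<le> k} \<union> {c\<in>D. T c = Suc k}"
    by (auto simp: le_Suc_eq)
  ultimately have "tableau_chain D T (Suc k) = insert a (tableau_chain D T k)"
    unfolding tableau_chain_def by simp
  moreover have "a \<notin> tableau_chain D T k" using a unfolding tableau_chain_def by simp
  ultimately show "\<exists>a. a \<notin> tableau_chain D T k \<and> tableau_chain D T (Suc k) = insert a (tableau_chain D T k)"
    by blast
qed

lemma chain_tableau_tableau_chain:
  assumes "T \<in> std_fillings D r"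
  shows "chain_tableau D (tableau_chain D T) = T"
proof
  fix c
  show "chain_tableau D (tableau_chain D T) c = T c"
  proof (cases "c \<in> D")
    case True
    then show ?thesis
      unfolding chain_tableau_def tableau_chain_def by (auto intro: Least_equality)
  next
    case False
    then show ?thesis using std_fillings_zero[OF assms] unfolding chain_tableau_def by simp
  qed
qed

lemma chain_tableau_le_iff:
  assumes t: "t \<in> sat_chains r D" and c: "c \<in> D"
  shows "c \<in> t k \<longleftrightarrow> chain_tableau D t c \<le> k"
proof -
  have "c \<in> t r" using c sat_chains_last[OF t] by simp
  then have L: "c \<in> t (chain_tableau D t c)"
    unfolding chain_tableau_def using c LeastI[of "\<lambda>k. c \<in> t k"] by simp
  show ?thesis
  proof
    assume "c \<in> t k"
    then show "chain_tableau D t c \<le> k" unfolding chain_tableau_def using c by (simp add: Least_le)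
  next
    assume "chain_tableau D t c \<le> k"
    then show "c \<in> t k" using sat_chains_mono[OF t] L by blast
  qed
qed

lemma tableau_chain_chain_tableau:
  assumes "t \<in> sat_chains r D"
  shows "tableau_chain D (chain_tableau D t) = t"
  unfolding tableau_chain_def using chain_tableau_le_iff[OF assms] sat_chains_subset[OF assms] by fastforce

lemma chain_tableau_eq_Suc_iff:
  assumes "t \<in> sat_chains r D" "c \<in> D"
  shows "chain_tableau D t c = Suc k \<longleftrightarrow> c \<in> t (Suc k) \<and> c \<notin> t k"
  using chain_tableau_le_iff[OF assms, of k] chain_tableau_le_iff[OF assms, of "Suc k"] by auto

lemma bij_betw_chain_tableau:
  assumes t: "t \<in> sat_chains r D"
  shows "bij_betw (chain_tableau D t) D {1..r}"
proof -
  have new_cell: "\<exists>a. a \<notin> t k \<and> t (Suc k) = insert a (t k)" if "k < r" for k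
    using t that unfolding sat_chains_def by blast
  have range: "chain_tableau D t c \<in> {1..r}" if "c \<in> D" for c
    using chain_tableau_le_iff[OF t that, of r] chain_tableau_le_iff[OF t that, of 0] that
      sat_chains_last[OF t, of r] t
    unfolding sat_chains_def by (auto simp: Suc_le_eq)
  have "inj_on (chain_tableau D t) D"
  proof (rule inj_onI)
    fix c c' assume c: "c \<in> D" and c': "c' \<in> D" and eq: "chain_tableau D t c = chain_tableau D t c'"
    obtain k where k: "chain_tableau D t c = Suc k" using range[OF c] by (cases "chain_tableau D t c") auto
    then have "k < r" using range[OF c] by simp
    then obtain a where "a \<notin> t k" "t (Suc k) = insert a (t k)" using new_cell by blast
    then show "c = c'"
      using chain_tableau_eq_Suc_iff[OF t c, of k] chain_tableau_eq_Suc_iff[OF t c', of k] k eq by auto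
  qed
  moreover have "{1..r} \<subseteq> chain_tableau D t ` D"
  proof
    fix m assume m: "m \<in> {1..r}"
    then obtain k where k: "m = Suc k" "k < r" by (cases m) auto
    then obtain a where a: "a \<notin> t k" "t (Suc k) = insert a (t k)" using new_cell by blast
    then have "a \<in> D" using sat_chains_subset[OF t, of "Suc k"] by auto
    then show "m \<in> chain_tableau D t ` D"
      using chain_tableau_eq_Suc_iff[OF t \<open>a \<in> D\<close>, of k] a k by (metis image_eqI insertI1)
  qed
  ultimately show ?thesis unfolding bij_betw_def using range by blast
qed

lemma chain_tableau_std:
  assumes t: "t \<in> sat_chains r D"
  shows "chain_tableau D t \<in> std_fillings D r"
proof -
  let ?T = "chain_tableau D t"
  have bij: "bij_betw ?T D {1..r}" by (rule bij_betw_chain_tableau[OF t])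
  have y: "young D" using sat_chains_young[OF t, of r] sat_chains_last[OF t, of r] by simp
  have le: "?T (i', j') \<le> ?T (i, j)" if "(i, j) \<in> D" "i' \<le> i" "j' \<le> j" for i j i' j'
  proof -
    have "(i, j) \<in> t (?T (i, j))" using chain_tableau_le_iff[OF t that(1)] by simp
    then have "(i', j') \<in> t (?T (i, j))" using youngD[OF sat_chains_young[OF t] _ that(2,3)] by blast
    then show ?thesis using chain_tableau_le_iff[OF t youngD[OF y that]] by simp
  qed
  have less: "?T (i', j') < ?T (i, j)"
    if "(i, j) \<in> D" "(i', j') \<in> D" "i' \<le> i" "j' \<le> j" "(i', j') \<noteq> (i, j)" for i j i' j'
    using le[OF that(1,3,4)] inj_onD[OF bij_betw_imp_inj_on[OF bij] _ that(2,1)] that(5)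
    by (meson le_neq_implies_less)
  show ?thesis
    unfolding std_fillings_def using bij less by (auto simp: chain_tableau_def)
qed

lemma bij_betw_tableau_chain:
  assumes "young D"
  shows "bij_betw (tableau_chain D) (std_fillings D r) (sat_chains r D)"
  by (rule bij_betw_byWitness[where f' = "chain_tableau D"])
    (auto simp: chain_tableau_tableau_chain tableau_chain_chain_tableau tableau_chain_sat[OF assms]
      chain_tableau_std)

lemma num_std_tableaux_eq_card_sat_chains:
  assumes "lam \<in> partitions r"
  shows "num_std_tableaux lam = card (sat_chains r (young_cells lam))"
  using bij_betw_same_card[OF bij_betw_tableau_chain[OF young_young_cells[OF assms]]] assms
  unfolding num_std_tableaux_def standard_tableaux_eq partitions_def by simp

lemma card_not_lis_le_eq_sum_num_std_tableaux:
  assumes "1 \<le> r"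
  shows "card {\<sigma>\<in>perms r. \<not> lis_le n r \<sigma>}
    = (\<Sum>lam\<in>{lam\<in>partitions r. n < hd lam}. num_std_tableaux lam ^ 2)"
proof -
  have "(\<Sum>lam\<in>{lam\<in>partitions r. n < hd lam}. num_std_tableaux lam ^ 2)
      = (\<Sum>lam\<in>{lam\<in>partitions r. n < hd lam}. card (sat_chains r (young_cells lam)) ^ 2)"
    by (intro sum.cong) (auto simp: num_std_tableaux_eq_card_sat_chains)
  also have "\<dots> = (\<Sum>D\<in>wide_diagrams n r. card (sat_chains r D) ^ 2)"
    by (rule sum.reindex_bij_betw[OF bij_betw_young_cells[OF assms]])
  finally show ?thesis using card_not_lis_le by simp
qed

theorem corollary3p7:
  fixes n r :: nat
  assumes "n \<ge> 1" and "r \<ge> 1"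
  shows "\<exists>m. free_of_rank
            (module.span mscale ((Phi n r :: (nat \<Rightarrow> nat) \<Rightarrow> nat list \<Rightarrow> nat list \<Rightarrow> 'a::idom)
               ` {\<sigma>. \<sigma> permutes {..<r}})) m
          \<and> int m = int (fact r)
              - (\<Sum>lam\<in>{lam\<in>partitions r. hd lam > n}. int (num_std_tableaux lam) ^ 2)"
proof (intro exI conjI)
  let ?short = "{\<sigma>\<in>perms r. lis_le n r \<sigma>}" and ?long = "{\<sigma>\<in>perms r. \<not> lis_le n r \<sigma>}"
  show "free_of_rank (module.span mscale ((Phi n r :: _ \<Rightarrow> 'a word_matrix) ` {\<sigma>. \<sigma> permutes {..<r}}))
      (card ?short)"
    by (rule free_of_rank_span_Phi)
  have "card (?short \<union> ?long) = card ?short + card ?long"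
    using finite_perms by (intro card_Un_disjoint) auto
  moreover have "?short \<union> ?long = perms r" by auto
  ultimately have "int (card ?short) + int (card ?long) = int (fact r)"
    using card_perms by (metis of_nat_add)
  moreover have "int (card ?long) = (\<Sum>lam\<in>{lam\<in>partitions r. hd lam > n}. int (num_std_tableaux lam) ^ 2)"
    using card_not_lis_le_eq_sum_num_std_tableaux[OF assms(2)] by simp
  ultimately show "int (card ?short) = int (fact r)
      - (\<Sum>lam\<in>{lam\<in>partitions r. hd lam > n}. int (num_std_tableaux lam) ^ 2)"
    by linarith
qed

end
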